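(* Let $G$ be a bipartite twisted net with $n$ vertices. Then each color class of $G$ contains exactly two corners, say $u_1,u_2$ in one class and $v_1,v_2$ in the other; the graph $G\setminus\{u_1,u_2,v_1,v_2\}$ has a perfect matching (the empty graph counting as having one), and for all $i,j\in\{1,2\}$ the graph $G\setminus\{u_i,v_j\}$ has a perfect matching. Moreover, for some $i,j\in\{1,2\}$, the graph $G\setminus\{u_i,v_j\}$ has at least $2^{n/18-2/9}$ perfect matchings.
   Context: In a graph with all degrees $2$ or $3$, the degree-two vertices are corners; for a graph consisting of a single edge, both its ends are corners. Twisted nets are defined inductively: a $4$-cycle is a twisted net; if $T$ is a twisted net and $H$ is (disjoint from $T$) either a twisted net or a single edge, then the graph obtained from $T\cup H$ by adding edges $uv$ and $u'v'$, where $u\neq u'$ are corners of $T$ and $v\ne v'$ are corners of $H$, is a twisted net. Every twisted net has exactly four corners. $G\setminus S$ denotes deletion of the vertex set $S$. *)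

theory Defs
  imports Complex_Main
begin

text \<open>A (simple) graph is given by a vertex set V and an edge set E of 2-element subsets.\<close>

definition degree :: "'a set set \<Rightarrow> 'a \<Rightarrow> nat" where
  "degree E v = card {e \<in> E. v \<in> e}"

definition corners :: "'a set \<Rightarrow> 'a set set \<Rightarrow> 'a set" where
  "corners V E = {v \<in> V. degree E v = 2}"

inductive twisted_net :: "'a set \<Rightarrow> 'a set set \<Rightarrow> bool" where
  cycle4: "\<lbrakk> distinct [a, b, c, d] \<rbrakk> \<Longrightarrow>
     twisted_net {a, b, c, d} {{a, b}, {b, c}, {c, d}, {d, a}}"
| join_net: "\<lbrakk> twisted_net V1 E1; twisted_net V2 E2; V1 \<inter> V2 = {};
     u \<in> corners V1 E1; u' \<in> corners V1 E1; u \<noteq> u';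
     v \<in> corners V2 E2; v' \<in> corners V2 E2; v \<noteq> v' \<rbrakk> \<Longrightarrow>
     twisted_net (V1 \<union> V2) (E1 \<union> E2 \<union> {{u, v}, {u', v'}})"
| join_edge: "\<lbrakk> twisted_net V1 E1; a \<noteq> b; a \<notin> V1; b \<notin> V1;
     u \<in> corners V1 E1; u' \<in> corners V1 E1; u \<noteq> u' \<rbrakk> \<Longrightarrow>
     twisted_net (V1 \<union> {a, b}) (E1 \<union> {{a, b}} \<union> {{u, a}, {u', b}})"

definition del_verts_V :: "'a set \<Rightarrow> 'a set \<Rightarrow> 'a set" where
  "del_verts_V V S = V - S"
definition del_verts_E :: "'a set set \<Rightarrow> 'a set \<Rightarrow> 'a set set" where
  "del_verts_E E S = {e \<in> E. e \<inter> S = {}}"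

definition perfect_matching :: "'a set \<Rightarrow> 'a set set \<Rightarrow> 'a set set \<Rightarrow> bool" where
  "perfect_matching V E M \<longleftrightarrow> M \<subseteq> E \<and> (\<forall>v\<in>V. \<exists>!e. e \<in> M \<and> v \<in> e)"

definition perfect_matchings :: "'a set \<Rightarrow> 'a set set \<Rightarrow> 'a set set set" where
  "perfect_matchings V E = {M. perfect_matching V E M}"

definition bipartition :: "'a set \<Rightarrow> 'a set set \<Rightarrow> 'a set \<Rightarrow> 'a set \<Rightarrow> bool" where
  "bipartition V E A B \<longleftrightarrow> A \<union> B = V \<and> A \<inter> B = {} \<and>
     (\<forall>e\<in>E. card (e \<inter> A) = 1 \<and> card (e \<inter> B) = 1)"

definition bipartite :: "'a set \<Rightarrow> 'a set set \<Rightarrow> bool" where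
  "bipartite V E \<longleftrightarrow> (\<exists>A B. bipartition V E A B)"

end

theory Submission
  imports Defs
begin

text \<open>
  For a bipartite
  twisted net with colour classes A and B we maintain a labelling of its four corners as
  a1, a2 (in A) and b1, b2 (in B) together with the invariant good_counts on the numbers
    m_ij = #perfect matchings of G - {a_i, b_j},  z = #perfect matchings of G - {a1, a2, b1, b2},
    p = #perfect matchings of G,  n = |V|:
  all these counts are positive, the products m11*m22, m12*m21 and p*z satisfy the triangle
  inequalities, and 2^(n-2) <= m11*m22*m12*m21*p^2.  The last inequality gives
  max m_ij >= 2^((n-4)/8) >= 2^(n/18-2/9).

  The counting tool is a formula for the perfect matchings of two vertex-disjoint graphs
  joined by two disjoint cross edges (nmatch_join): one sums over the cross edges used.
  In a bipartite graph, deleting a set with unequally many vertices of both colours leaves no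
  perfect matching, so most terms vanish and every construction step expresses the new counts
  as simple bilinear forms in the old ones.  That these forms preserve the invariant is pure
  integer arithmetic.
\<close>

section \<open>Perfect matchings of induced subgraphs\<close>

text \<open>The perfect matchings of the subgraph induced by X: sets of pairwise disjoint edges
  covering exactly X.\<close>
definition matchings :: "'a set set \<Rightarrow> 'a set \<Rightarrow> 'a set set set" where
  "matchings E X = {M. M \<subseteq> E \<and> \<Union>M = X \<and> pairwise disjnt M}"

definition nmatch :: "'a set set \<Rightarrow> 'a set \<Rightarrow> nat" where
  "nmatch E X = card (matchings E X)"

lemma pairwise_disjnt_eq:
  assumes "pairwise disjnt M" "e \<in> M" "f \<in> M" "x \<in> e" "x \<in> f"
  shows "e = f"
proof (rule ccontr)
  assume "e \<noteq> f"
  with assms(1-3) have "disjnt e f" by (rule pairwiseD)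
  with assms(4,5) show False by (simp add: disjnt_iff)
qed

lemma pairwise_disjntI:
  "(\<And>e f x. e \<in> M \<Longrightarrow> f \<in> M \<Longrightarrow> x \<in> e \<Longrightarrow> x \<in> f \<Longrightarrow> e = f) \<Longrightarrow> pairwise disjnt M"
  unfolding pairwise_def disjnt_iff by blast

lemma Union_Diff_pairwise_disjnt:
  assumes "pairwise disjnt M" "F \<subseteq> M"
  shows "\<Union>(M - F) = \<Union>M - \<Union>F"
  using assms pairwise_disjnt_eq[OF assms(1)] by blast

lemma perfect_matchings_eq_matchings:
  assumes E: "\<forall>e\<in>E. e \<subseteq> V"
  shows "perfect_matchings (del_verts_V V S) (del_verts_E E S) = matchings E (V - S)"
proof (intro set_eqI iffI)
  fix M assume "M \<in> perfect_matchings (del_verts_V V S) (del_verts_E E S)"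
  then have M: "M \<subseteq> {e \<in> E. e \<inter> S = {}}" and cover: "\<forall>x\<in>V - S. \<exists>!e. e \<in> M \<and> x \<in> e"
    unfolding perfect_matchings_def perfect_matching_def del_verts_V_def del_verts_E_def by auto
  have inside: "e \<subseteq> V - S" if "e \<in> M" for e using that M E by blast
  have "pairwise disjnt M"
  proof (rule pairwise_disjntI)
    fix e f x assume exf: "e \<in> M" "f \<in> M" "x \<in> e" "x \<in> f"
    then have "x \<in> V - S" using inside by blast
    then obtain g where "\<forall>h. h \<in> M \<and> x \<in> h \<longrightarrow> h = g" using cover by (meson ex1E)
    then show "e = f" using exf by blast
  qed
  moreover have "\<Union>M = V - S"
  proof
    show "\<Union>M \<subseteq> V - S" using inside by blast
    show "V - S \<subseteq> \<Union>M" using cover by (meson UnionI ex1_implies_ex subsetI)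
  qed
  ultimately show "M \<in> matchings E (V - S)" using M unfolding matchings_def by blast
next
  fix M assume "M \<in> matchings E (V - S)"
  then have M: "M \<subseteq> E" "\<Union>M = V - S" "pairwise disjnt M" unfolding matchings_def by auto
  have "\<exists>!e. e \<in> M \<and> x \<in> e" if x: "x \<in> V - S" for x
  proof -
    from x M(2) obtain e where e: "e \<in> M" "x \<in> e" by (metis UnionE)
    show ?thesis
    proof (rule ex1I)
      show "e \<in> M \<and> x \<in> e" using e by simp
      show "f = e" if "f \<in> M \<and> x \<in> f" for f
        using pairwise_disjnt_eq[OF M(3)] e that by blast
    qed
  qed
  moreover have "M \<subseteq> {e \<in> E. e \<inter> S = {}}" using M by blast
  ultimately show "M \<in> perfect_matchings (del_verts_V V S) (del_verts_E E S)"
    unfolding perfect_matchings_def perfect_matching_def del_verts_V_def del_verts_E_def by simp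
qed

lemma matchings_finite: "finite E \<Longrightarrow> finite (matchings E X)"
  unfolding matchings_def by (rule finite_subset[of _ "Pow E"]) auto

lemma matchings_Un:
  assumes X: "X1 \<inter> X2 = {}" and M: "M1 \<in> matchings E1 X1" "M2 \<in> matchings E2 X2"
  shows "M1 \<union> M2 \<in> matchings (E1 \<union> E2) (X1 \<union> X2)"
proof -
  have M1: "M1 \<subseteq> E1" "\<Union>M1 = X1" "pairwise disjnt M1"
    and M2: "M2 \<subseteq> E2" "\<Union>M2 = X2" "pairwise disjnt M2"
    using M unfolding matchings_def by auto
  have "pairwise disjnt (M1 \<union> M2)"
  proof (rule pairwise_disjntI)
    fix e f x assume "e \<in> M1 \<union> M2" "f \<in> M1 \<union> M2" "x \<in> e" "x \<in> f"
    then show "e = f"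
      using pairwise_disjnt_eq[OF M1(3)] pairwise_disjnt_eq[OF M2(3)] X M1(2) M2(2) by blast
  qed
  then show ?thesis using M1 M2 unfolding matchings_def by auto
qed

lemma nmatch_fixed_edges:
  assumes EC: "E \<inter> C = {}" and F: "F \<subseteq> C" "pairwise disjnt F" "\<Union>F \<subseteq> X"
  shows "card {M \<in> matchings (E \<union> C) X. M \<inter> C = F} = nmatch E (X - \<Union>F)"
proof -
  have "bij_betw (\<lambda>N. N \<union> F) (matchings E (X - \<Union>F)) {M \<in> matchings (E \<union> C) X. M \<inter> C = F}"
  proof (rule bij_betw_byWitness[where f' = "\<lambda>M. M - F"])
    show "\<forall>N\<in>matchings E (X - \<Union>F). N \<union> F - F = N"
      using EC F(1) unfolding matchings_def by blast
    show "\<forall>M\<in>{M \<in> matchings (E \<union> C) X. M \<inter> C = F}. M - F \<union> F = M" by blast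
    show "(\<lambda>N. N \<union> F) ` matchings E (X - \<Union>F) \<subseteq> {M \<in> matchings (E \<union> C) X. M \<inter> C = F}"
    proof (rule image_subsetI)
      fix N assume N: "N \<in> matchings E (X - \<Union>F)"
      have "F \<in> matchings C (\<Union>F)" using F(1,2) unfolding matchings_def by blast
      with N have "N \<union> F \<in> matchings (E \<union> C) ((X - \<Union>F) \<union> \<Union>F)"
        by (intro matchings_Un) blast+
      moreover have "(X - \<Union>F) \<union> \<Union>F = X" using F(3) by blast
      moreover have "(N \<union> F) \<inter> C = F" using N EC F(1) unfolding matchings_def by blast
      ultimately show "N \<union> F \<in> {M \<in> matchings (E \<union> C) X. M \<inter> C = F}" by simp
    qed
    show "(\<lambda>M. M - F) ` {M \<in> matchings (E \<union> C) X. M \<inter> C = F} \<subseteq> matchings E (X - \<Union>F)"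
    proof (rule image_subsetI)
      fix M assume "M \<in> {M \<in> matchings (E \<union> C) X. M \<inter> C = F}"
      then have M: "M \<subseteq> E \<union> C" "\<Union>M = X" "pairwise disjnt M" "M \<inter> C = F"
        unfolding matchings_def by auto
      have "\<Union>(M - F) = X - \<Union>F"
        using Union_Diff_pairwise_disjnt[OF M(3)] M(2,4) by blast
      moreover have "M - F \<subseteq> E" using M(1,4) by blast
      moreover have "pairwise disjnt (M - F)" by (rule pairwise_subset[OF M(3)]) blast
      ultimately show "M - F \<in> matchings E (X - \<Union>F)" unfolding matchings_def by blast
    qed
  qed
  from bij_betw_same_card[OF this] show ?thesis unfolding nmatch_def by simp
qed

lemma matching_restrict_part:
  assumes M: "M \<in> matchings (E1 \<union> E2) X" and V12: "V1 \<inter> V2 = {}"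
    and E1: "\<forall>e\<in>E1. e \<subseteq> V1" and E2: "\<forall>e\<in>E2. e \<subseteq> V2"
  shows "M \<inter> E1 \<in> matchings E1 (X \<inter> V1)"
proof -
  have M': "M \<subseteq> E1 \<union> E2" "\<Union>M = X" "pairwise disjnt M" using M unfolding matchings_def by auto
  have "\<Union>(M \<inter> E1) = X \<inter> V1"
  proof
    show "\<Union>(M \<inter> E1) \<subseteq> X \<inter> V1" using M'(2) E1 by blast
    show "X \<inter> V1 \<subseteq> \<Union>(M \<inter> E1)"
    proof
      fix y assume y: "y \<in> X \<inter> V1"
      then obtain e where e: "e \<in> M" "y \<in> e" using M'(2) by blast
      then have "e \<notin> E2" using E2 V12 y by blast
      then show "y \<in> \<Union>(M \<inter> E1)" using e M'(1) by blast
    qed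
  qed
  moreover have "pairwise disjnt (M \<inter> E1)" by (rule pairwise_subset[OF M'(3)]) blast
  ultimately show ?thesis unfolding matchings_def by auto
qed

lemma nmatch_disjoint_union:
  assumes V12: "V1 \<inter> V2 = {}" and E1: "\<forall>e\<in>E1. e \<subseteq> V1 \<and> e \<noteq> {}" and E2: "\<forall>e\<in>E2. e \<subseteq> V2"
    and X: "X \<subseteq> V1 \<union> V2"
  shows "nmatch (E1 \<union> E2) X = nmatch E1 (X \<inter> V1) * nmatch E2 (X \<inter> V2)"
proof -
  have E12: "E1 \<inter> E2 = {}"
  proof (rule ccontr)
    assume "E1 \<inter> E2 \<noteq> {}"
    then obtain e where "e \<in> E1" "e \<in> E2" by blast
    moreover from this obtain x where "x \<in> e" using E1 by blast
    ultimately have "x \<in> V1 \<inter> V2" using E1 E2 by blast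
    with V12 show False by simp
  qed
  have "bij_betw (\<lambda>(N1, N2). N1 \<union> N2) (matchings E1 (X \<inter> V1) \<times> matchings E2 (X \<inter> V2))
          (matchings (E1 \<union> E2) X)"
  proof (rule bij_betw_byWitness[where f' = "\<lambda>M. (M \<inter> E1, M \<inter> E2)"])
    show "\<forall>N\<in>matchings E1 (X \<inter> V1) \<times> matchings E2 (X \<inter> V2).
        (\<lambda>M. (M \<inter> E1, M \<inter> E2)) ((\<lambda>(N1, N2). N1 \<union> N2) N) = N"
    proof
      fix N assume "N \<in> matchings E1 (X \<inter> V1) \<times> matchings E2 (X \<inter> V2)"
      then obtain N1 N2 where N: "N = (N1, N2)" "N1 \<subseteq> E1" "N2 \<subseteq> E2"
        unfolding matchings_def by auto
      then show "(\<lambda>M. (M \<inter> E1, M \<inter> E2)) ((\<lambda>(N1, N2). N1 \<union> N2) N) = N" using E12 by auto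
    qed
    show "\<forall>M\<in>matchings (E1 \<union> E2) X. (\<lambda>(N1, N2). N1 \<union> N2) (M \<inter> E1, M \<inter> E2) = M"
      unfolding matchings_def by auto
    show "(\<lambda>(N1, N2). N1 \<union> N2) ` (matchings E1 (X \<inter> V1) \<times> matchings E2 (X \<inter> V2))
        \<subseteq> matchings (E1 \<union> E2) X"
    proof (rule image_subsetI, clarify)
      fix N1 N2 assume "N1 \<in> matchings E1 (X \<inter> V1)" "N2 \<in> matchings E2 (X \<inter> V2)"
      with V12 have "N1 \<union> N2 \<in> matchings (E1 \<union> E2) (X \<inter> V1 \<union> X \<inter> V2)"
        by (intro matchings_Un) blast+
      moreover have "X \<inter> V1 \<union> X \<inter> V2 = X" using X by blast
      ultimately show "N1 \<union> N2 \<in> matchings (E1 \<union> E2) X" by simp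
    qed
    show "(\<lambda>M. (M \<inter> E1, M \<inter> E2)) ` matchings (E1 \<union> E2) X
        \<subseteq> matchings E1 (X \<inter> V1) \<times> matchings E2 (X \<inter> V2)"
    proof (rule image_subsetI)
      fix M assume M: "M \<in> matchings (E1 \<union> E2) X"
      then have M': "M \<in> matchings (E2 \<union> E1) X" by (simp add: Un_commute)
      have "V2 \<inter> V1 = {}" "\<forall>e\<in>E1. e \<subseteq> V1" "\<forall>e\<in>E2. e \<subseteq> V2" using V12 E1 E2 by blast+
      then show "(M \<inter> E1, M \<inter> E2) \<in> matchings E1 (X \<inter> V1) \<times> matchings E2 (X \<inter> V2)"
        using matching_restrict_part[OF M V12] matching_restrict_part[OF M'] by blast
    qed
  qed
  from bij_betw_same_card[OF this] show ?thesis
    unfolding nmatch_def by (simp add: card_cartesian_product)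
qed

lemma nmatch_cross_edges:
  assumes V12: "V1 \<inter> V2 = {}" and E1: "\<forall>e\<in>E1. e \<subseteq> V1 \<and> e \<noteq> {}" and E2: "\<forall>e\<in>E2. e \<subseteq> V2"
    and C: "finite C" "pairwise disjnt C" "C \<inter> (E1 \<union> E2) = {}"
    and fin: "finite E1" "finite E2" and X: "X \<subseteq> V1 \<union> V2"
  shows "nmatch (E1 \<union> E2 \<union> C) X = (\<Sum>F\<in>Pow C. if \<Union>F \<subseteq> X
           then nmatch E1 ((X - \<Union>F) \<inter> V1) * nmatch E2 ((X - \<Union>F) \<inter> V2) else 0)"
proof -
  define cls where "cls F = {M \<in> matchings (E1 \<union> E2 \<union> C) X. M \<inter> C = F}" for F
  have "finite (matchings (E1 \<union> E2 \<union> C) X)" using fin C(1) by (simp add: matchings_finite)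
  then have fin_cls: "finite (cls F)" for F unfolding cls_def by (rule rev_finite_subset) blast
  have "matchings (E1 \<union> E2 \<union> C) X = (\<Union>F\<in>Pow C. cls F)"
  proof (intro equalityI subsetI)
    fix M assume "M \<in> matchings (E1 \<union> E2 \<union> C) X"
    then show "M \<in> (\<Union>F\<in>Pow C. cls F)" unfolding cls_def by (intro UN_I[of "M \<inter> C"]) auto
  qed (auto simp: cls_def)
  moreover have "card (\<Union>F\<in>Pow C. cls F) = (\<Sum>F\<in>Pow C. card (cls F))"
    by (rule card_UN_disjoint) (use C(1) fin_cls in \<open>auto simp: cls_def\<close>)
  ultimately have "nmatch (E1 \<union> E2 \<union> C) X = (\<Sum>F\<in>Pow C. card (cls F))"
    unfolding nmatch_def by simp
  also have "\<dots> = (\<Sum>F\<in>Pow C. if \<Union>F \<subseteq> X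
           then nmatch E1 ((X - \<Union>F) \<inter> V1) * nmatch E2 ((X - \<Union>F) \<inter> V2) else 0)"
  proof (rule sum.cong[OF refl])
    fix F assume "F \<in> Pow C"
    then have F: "F \<subseteq> C" "pairwise disjnt F" using C(2) pairwise_subset by blast+
    show "card (cls F) = (if \<Union>F \<subseteq> X
           then nmatch E1 ((X - \<Union>F) \<inter> V1) * nmatch E2 ((X - \<Union>F) \<inter> V2) else 0)"
    proof (cases "\<Union>F \<subseteq> X")
      case True
      have "E1 \<union> E2 \<union> C = (E1 \<union> E2) \<union> C" by simp
      then have "card (cls F) = nmatch (E1 \<union> E2) (X - \<Union>F)"
        unfolding cls_def using nmatch_fixed_edges[OF _ F True] C(3) by auto
      also have "\<dots> = nmatch E1 ((X - \<Union>F) \<inter> V1) * nmatch E2 ((X - \<Union>F) \<inter> V2)"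
        by (rule nmatch_disjoint_union[OF V12 E1 E2]) (use X in blast)
      finally show ?thesis using True by simp
    next
      case False
      then have "cls F = {}" unfolding cls_def matchings_def by blast
      then show ?thesis using False by simp
    qed
  qed
  finally show ?thesis .
qed

lemma sum_Pow_doubleton:
  assumes "e \<noteq> f"
  shows "(\<Sum>F\<in>Pow {e, f}. g F) = g {} + g {e} + g {f} + g {e, f}"
proof -
  have "Pow {e, f} = {{}, {e}, {f}, {e, f}}" by (auto simp: subset_insert_iff)
  then show ?thesis using assms by (simp add: insert_commute add.assoc)
qed

text \<open>The four summands correspond to the matchings
  using no cross edge, only uv, only u'v', or both.\<close>
lemma nmatch_join:
  assumes V12: "V1 \<inter> V2 = {}" and E1: "\<forall>e\<in>E1. e \<subseteq> V1 \<and> e \<noteq> {}" and E2: "\<forall>e\<in>E2. e \<subseteq> V2"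
    and fin: "finite E1" "finite E2"
    and u: "u \<in> V1" "u' \<in> V1" "u \<noteq> u'" and v: "v \<in> V2" "v' \<in> V2" "v \<noteq> v'"
  shows "nmatch (E1 \<union> E2 \<union> {{u, v}, {u', v'}}) (V1 \<union> V2 - S) =
      nmatch E1 (V1 - S \<inter> V1) * nmatch E2 (V2 - S \<inter> V2)
    + (if u \<notin> S \<inter> V1 \<and> v \<notin> S \<inter> V2
       then nmatch E1 (V1 - insert u (S \<inter> V1)) * nmatch E2 (V2 - insert v (S \<inter> V2)) else 0)
    + (if u' \<notin> S \<inter> V1 \<and> v' \<notin> S \<inter> V2
       then nmatch E1 (V1 - insert u' (S \<inter> V1)) * nmatch E2 (V2 - insert v' (S \<inter> V2)) else 0)
    + (if u \<notin> S \<inter> V1 \<and> v \<notin> S \<inter> V2 \<and> u' \<notin> S \<inter> V1 \<and> v' \<notin> S \<inter> V2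
       then nmatch E1 (V1 - insert u (insert u' (S \<inter> V1)))
          * nmatch E2 (V2 - insert v (insert v' (S \<inter> V2))) else 0)"
    (is "_ = ?rhs")
proof -
  have out: "u \<notin> V2" "u' \<notin> V2" "v \<notin> V1" "v' \<notin> V1" using u v V12 by blast+
  have ne: "{u, v} \<noteq> {u', v'}" using u out by (auto simp: doubleton_eq_iff)
  have "disjnt {u, v} {u', v'}" using u v out by (auto simp: disjnt_def)
  then have C1: "pairwise disjnt {{u, v}, {u', v'}}" by (auto simp: pairwise_insert disjnt_sym)
  have "{u, v} \<notin> E1 \<union> E2" "{u', v'} \<notin> E1 \<union> E2" using E1 E2 out by auto
  then have C2: "{{u, v}, {u', v'}} \<inter> (E1 \<union> E2) = {}" by blast
  define X where "X = V1 \<union> V2 - S"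
  have "nmatch (E1 \<union> E2 \<union> {{u, v}, {u', v'}}) X =
    (\<Sum>F\<in>Pow {{u, v}, {u', v'}}. if \<Union>F \<subseteq> X
      then nmatch E1 ((X - \<Union>F) \<inter> V1) * nmatch E2 ((X - \<Union>F) \<inter> V2) else 0)"
    by (rule nmatch_cross_edges[OF V12 E1 E2 _ C1 C2 fin]) (auto simp: X_def)
  also have "\<dots> = (\<Sum>F\<in>Pow {{u, v}, {u', v'}}. if \<Union>F \<inter> S = {}
      then nmatch E1 (V1 - (\<Union>F \<inter> V1 \<union> S \<inter> V1)) * nmatch E2 (V2 - (\<Union>F \<inter> V2 \<union> S \<inter> V2))
      else 0)"
  proof (rule sum.cong[OF refl])
    fix F assume "F \<in> Pow {{u, v}, {u', v'}}"
    then have "\<Union>F \<subseteq> V1 \<union> V2" using u v by blast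
    then have "(\<Union>F \<subseteq> X) = (\<Union>F \<inter> S = {})" unfolding X_def by blast
    moreover have "(X - \<Union>F) \<inter> V1 = V1 - (\<Union>F \<inter> V1 \<union> S \<inter> V1)"
      "(X - \<Union>F) \<inter> V2 = V2 - (\<Union>F \<inter> V2 \<union> S \<inter> V2)" unfolding X_def using V12 by blast+
    ultimately show "(if \<Union>F \<subseteq> X
      then nmatch E1 ((X - \<Union>F) \<inter> V1) * nmatch E2 ((X - \<Union>F) \<inter> V2) else 0)
      = (if \<Union>F \<inter> S = {}
      then nmatch E1 (V1 - (\<Union>F \<inter> V1 \<union> S \<inter> V1)) * nmatch E2 (V2 - (\<Union>F \<inter> V2 \<union> S \<inter> V2))
      else 0)"
      by simp
  qed
  also have "\<dots> = ?rhs"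
    unfolding sum_Pow_doubleton[OF ne] using u v out by (simp add: Int_insert_left insert_commute)
  finally show ?thesis unfolding X_def .
qed

lemma nmatch_no_vertices: "{} \<notin> E \<Longrightarrow> nmatch E {} = 1"
proof -
  assume "{} \<notin> E"
  then have "matchings E {} = {{}}" unfolding matchings_def by auto
  then show ?thesis unfolding nmatch_def by simp
qed

lemma nmatch_single_edge:
  assumes "a \<noteq> b"
  shows "nmatch {{a, b}} {a, b} = 1" "nmatch {{a, b}} {a} = 0" "nmatch {{a, b}} {b} = 0"
proof -
  have cover: "\<Union>M = {} \<or> M = {{a, b}}" if "M \<subseteq> {{a, b}}" for M
    using that by (cases "M = {}") auto
  have "matchings {{a, b}} {a, b} = {{{a, b}}}"
  proof (intro equalityI subsetI)
    fix M assume "M \<in> matchings {{a, b}} {a, b}"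
    then show "M \<in> {{{a, b}}}" using cover[of M] unfolding matchings_def by auto
  qed (simp add: matchings_def)
  moreover have "matchings {{a, b}} {x} = {}" for x
  proof -
    have "M \<notin> matchings {{a, b}} {x}" for M
    proof
      assume "M \<in> matchings {{a, b}} {x}"
      then have "M \<subseteq> {{a, b}}" "\<Union>M = {x}" unfolding matchings_def by auto
      then have "{a, b} = {x}" using cover[of M] by auto
      then show False using assms by (simp add: doubleton_eq_iff)
    qed
    then show ?thesis by blast
  qed
  ultimately show "nmatch {{a, b}} {a, b} = 1" "nmatch {{a, b}} {a} = 0" "nmatch {{a, b}} {b} = 0"
    unfolding nmatch_def by simp_all
qed

section \<open>Colour balance\<close>

lemma matching_card_side:
  assumes M: "M \<in> matchings E X" and fin: "finite E" and A: "\<forall>e\<in>E. card (e \<inter> A) = 1"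
  shows "card (X \<inter> A) = card M"
proof -
  have M': "M \<subseteq> E" "\<Union>M = X" "pairwise disjnt M" using M unfolding matchings_def by auto
  have "X \<inter> A = (\<Union>e\<in>M. e \<inter> A)" using M'(2) by blast
  also have "card \<dots> = (\<Sum>e\<in>M. card (e \<inter> A))"
  proof (rule card_UN_disjoint)
    show "finite M" using M'(1) fin by (rule finite_subset)
    show "\<forall>e\<in>M. finite (e \<inter> A)" using M'(1) A by (metis card_ge_0_finite subsetD zero_less_one)
    show "\<forall>e\<in>M. \<forall>f\<in>M. e \<noteq> f \<longrightarrow> e \<inter> A \<inter> (f \<inter> A) = {}"
      using M'(3) unfolding pairwise_def disjnt_def by blast
  qed
  also have "\<dots> = (\<Sum>e\<in>M. 1)" using M'(1) A by (intro sum.cong) auto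
  also have "\<dots> = card M" by simp
  finally show ?thesis .
qed

lemma nmatch_unbalanced:
  assumes fin: "finite E" and AB: "\<forall>e\<in>E. card (e \<inter> A) = 1 \<and> card (e \<inter> B) = 1"
    and X: "card (X \<inter> A) \<noteq> card (X \<inter> B)"
  shows "nmatch E X = 0"
proof -
  have "matchings E X = {}"
  proof (rule ccontr)
    assume "matchings E X \<noteq> {}"
    then obtain M where M: "M \<in> matchings E X" by blast
    have "card (X \<inter> A) = card M" using matching_card_side[OF M fin] AB by blast
    moreover have "card (X \<inter> B) = card M" using matching_card_side[OF M fin] AB by blast
    ultimately show False using X by simp
  qed
  then show ?thesis unfolding nmatch_def by simp
qed

lemma nmatch_delete_unbalanced:
  assumes fin: "finite E" "finite V" and AB: "\<forall>e\<in>E. card (e \<inter> A) = 1 \<and> card (e \<inter> B) = 1"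
    and pos: "0 < nmatch E V" and R: "R \<subseteq> V" "card (R \<inter> A) \<noteq> card (R \<inter> B)"
  shows "nmatch E (V - R) = 0"
proof (rule nmatch_unbalanced[OF fin(1) AB])
  have bal: "card (V \<inter> A) = card (V \<inter> B)" using nmatch_unbalanced[OF fin(1) AB, of V] pos by linarith
  have side: "card ((V - R) \<inter> C) = card (V \<inter> C) - card (R \<inter> C)"
    "card (R \<inter> C) \<le> card (V \<inter> C)" for C
  proof -
    have "(V - R) \<inter> C = V \<inter> C - R \<inter> C" "R \<inter> C \<subseteq> V \<inter> C" using R(1) by blast+
    moreover have "finite (R \<inter> C)" using R(1) fin(2) by (meson finite_Int finite_subset)
    ultimately show "card ((V - R) \<inter> C) = card (V \<inter> C) - card (R \<inter> C)"
      "card (R \<inter> C) \<le> card (V \<inter> C)"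
      using fin(2) by (simp_all add: card_Diff_subset card_mono)
  qed
  show "card ((V - R) \<inter> A) \<noteq> card ((V - R) \<inter> B)"
    using side[of A] side[of B] bal R(2) by linarith
qed

section \<open>Degrees and corners of twisted nets\<close>

definition net_wf :: "'a set \<Rightarrow> 'a set set \<Rightarrow> bool" where
  "net_wf V E \<longleftrightarrow> finite V \<and> finite E \<and> (\<forall>e\<in>E. e \<subseteq> V \<and> card e = 2) \<and> (\<forall>x\<in>V. 2 \<le> degree E x)"

lemma net_wf_parts:
  assumes "net_wf V E"
  shows "finite V" "finite E" "\<forall>e\<in>E. e \<subseteq> V \<and> e \<noteq> {}" "\<forall>e\<in>E. e \<subseteq> V"
  using assms unfolding net_wf_def by fastforce+

lemma degree_join:
  assumes V12: "V1 \<inter> V2 = {}" and E1: "\<forall>e\<in>E1. e \<subseteq> V1" and E2: "\<forall>e\<in>E2. e \<subseteq> V2"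
    and fin: "finite E1" "finite E2"
    and u: "u \<in> V1" "u' \<in> V1" "u \<noteq> u'" and v: "v \<in> V2" "v' \<in> V2" "v \<noteq> v'"
  shows "degree (E1 \<union> E2 \<union> {{u, v}, {u', v'}}) x =
    degree E1 x + degree E2 x + (if x \<in> {u, u', v, v'} then 1 else 0)"
proof -
  have out: "u \<notin> V2" "u' \<notin> V2" "v \<notin> V1" "v' \<notin> V1" using u v V12 by blast+
  have cross: "card {c \<in> {{u, v}, {u', v'}}. x \<in> c} = (if x \<in> {u, u', v, v'} then 1 else 0)"
  proof (cases "x \<in> {u, v}")
    case True
    then have "x \<notin> {u', v'}" using u v out by auto
    with True have "{c \<in> {{u, v}, {u', v'}}. x \<in> c} = {{u, v}}" by auto
    then show ?thesis using True by auto
  next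
    case False
    then have "{c \<in> {{u, v}, {u', v'}}. x \<in> c} = (if x \<in> {u', v'} then {{u', v'}} else {})" by auto
    then show ?thesis using False by auto
  qed
  have "{e \<in> E1 \<union> E2 \<union> {{u, v}, {u', v'}}. x \<in> e} =
      {e \<in> E1. x \<in> e} \<union> {e \<in> E2. x \<in> e} \<union> {c \<in> {{u, v}, {u', v'}}. x \<in> c}" by blast
  moreover have "{e \<in> E1. x \<in> e} \<inter> {e \<in> E2. x \<in> e} = {}"
  proof -
    have "x \<notin> V1 \<or> x \<notin> V2" using V12 by blast
    then show ?thesis using E1 E2 by blast
  qed
  moreover have "({e \<in> E1. x \<in> e} \<union> {e \<in> E2. x \<in> e}) \<inter> {c \<in> {{u, v}, {u', v'}}. x \<in> c} = {}"
  proof -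
    have "{u, v} \<notin> E1 \<union> E2" "{u', v'} \<notin> E1 \<union> E2" using E1 E2 out by auto
    then show ?thesis by blast
  qed
  ultimately show ?thesis
    unfolding degree_def using fin cross by (simp add: card_Un_disjoint)
qed

lemma degree_outside: "\<forall>e\<in>E. e \<subseteq> V \<Longrightarrow> x \<notin> V \<Longrightarrow> degree E x = 0"
  unfolding degree_def by (metis (mono_tags, lifting) card.empty empty_Collect_eq subsetD)

lemma corners_join:
  assumes wf: "net_wf V1 E1" "net_wf V2 E2" and V12: "V1 \<inter> V2 = {}"
    and u: "u \<in> corners V1 E1" "u' \<in> corners V1 E1" "u \<noteq> u'"
    and v: "v \<in> corners V2 E2" "v' \<in> corners V2 E2" "v \<noteq> v'"
  shows "corners (V1 \<union> V2) (E1 \<union> E2 \<union> {{u, v}, {u', v'}}) =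
    (corners V1 E1 - {u, u'}) \<union> (corners V2 E2 - {v, v'})"
proof -
  have E: "\<forall>e\<in>E1. e \<subseteq> V1" "\<forall>e\<in>E2. e \<subseteq> V2" "finite E1" "finite E2"
    and deg: "\<forall>x\<in>V1. 2 \<le> degree E1 x" "\<forall>x\<in>V2. 2 \<le> degree E2 x"
    using wf unfolding net_wf_def by auto
  have uv: "u \<in> V1" "u' \<in> V1" "v \<in> V2" "v' \<in> V2" using u v unfolding corners_def by auto
  note d = degree_join[OF V12 E uv(1,2) u(3) uv(3,4) v(3)]
  have "x \<in> corners (V1 \<union> V2) (E1 \<union> E2 \<union> {{u, v}, {u', v'}}) \<longleftrightarrow>
      x \<in> (corners V1 E1 - {u, u'}) \<union> (corners V2 E2 - {v, v'})" for x
  proof (cases "x \<in> V1")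
    case True
    then have "x \<notin> V2" using V12 by blast
    then have "degree E2 x = 0" "x \<noteq> v" "x \<noteq> v'" using degree_outside[OF E(2)] uv by auto
    then show ?thesis using True d[of x] deg(1) V12 unfolding corners_def by auto
  next
    case False
    then have "degree E1 x = 0" "x \<noteq> u" "x \<noteq> u'" using degree_outside[OF E(1)] uv by auto
    then show ?thesis using False d[of x] deg(2) unfolding corners_def by auto
  qed
  then show ?thesis by blast
qed

lemma degree_single_edge: "degree {{a, b}} x = (if x \<in> {a, b} then 1 else 0)"
proof -
  have "{e \<in> {{a, b}}. x \<in> e} = (if x \<in> {a, b} then {{a, b}} else {})" by auto
  then show ?thesis unfolding degree_def by simp
qed

lemma corners_join_edge:
  assumes wf: "net_wf V1 E1" and ab: "a \<noteq> b" "a \<notin> V1" "b \<notin> V1"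
    and u: "u \<in> corners V1 E1" "u' \<in> corners V1 E1" "u \<noteq> u'"
  shows "corners (V1 \<union> {a, b}) (E1 \<union> {{a, b}} \<union> {{u, a}, {u', b}}) =
    (corners V1 E1 - {u, u'}) \<union> {a, b}"
proof -
  have E: "\<forall>e\<in>E1. e \<subseteq> V1" "finite E1" and deg: "\<forall>x\<in>V1. 2 \<le> degree E1 x"
    using wf unfolding net_wf_def by auto
  have uv: "u \<in> V1" "u' \<in> V1" using u unfolding corners_def by auto
  have V12: "V1 \<inter> {a, b} = {}" using ab by blast
  note d = degree_join[OF V12 E(1) _ E(2) _ uv u(3) _ _ ab(1), of "{{a, b}}"]
  have "x \<in> corners (V1 \<union> {a, b}) (E1 \<union> {{a, b}} \<union> {{u, a}, {u', b}}) \<longleftrightarrow>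
      x \<in> (corners V1 E1 - {u, u'}) \<union> {a, b}" for x
    using d[of x] deg degree_outside[OF E(1)] uv ab unfolding corners_def degree_single_edge by auto
  then show ?thesis by blast
qed

lemma degree_cycle4:
  assumes "distinct [a, b, c, d]" and "x \<in> {a, b, c, d}"
  shows "degree {{a, b}, {b, c}, {c, d}, {d, a}} x = 2"
proof -
  define E where "E = {{a, b}, {b, c}, {c, d}, {d, a}}"
  have "a \<noteq> b" "a \<noteq> c" "a \<noteq> d" "b \<noteq> c" "b \<noteq> d" "c \<noteq> d" using assms(1) by auto
  note dist = this this[THEN not_sym]
  have "{e \<in> E. a \<in> e} = {{a, b}, {d, a}}" "{e \<in> E. b \<in> e} = {{a, b}, {b, c}}"
    "{e \<in> E. c \<in> e} = {{b, c}, {c, d}}" "{e \<in> E. d \<in> e} = {{c, d}, {d, a}}"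
    using dist unfolding E_def by auto
  then have "degree E a = 2" "degree E b = 2" "degree E c = 2" "degree E d = 2"
    unfolding degree_def using dist by (simp_all add: doubleton_eq_iff)
  then show ?thesis using assms(2) unfolding E_def by blast
qed

lemma twisted_net_wf: "twisted_net V E \<Longrightarrow> net_wf V E"
proof (induction rule: twisted_net.induct)
  case (cycle4 a b c d)
  then show ?case using degree_cycle4[OF cycle4] unfolding net_wf_def by (auto simp: card_insert_if)
next
  case (join_net V1 E1 V2 E2 u u' v v')
  have wf: "finite V1" "finite V2" "finite E1" "finite E2"
    "\<forall>e\<in>E1. e \<subseteq> V1 \<and> card e = 2" "\<forall>e\<in>E2. e \<subseteq> V2 \<and> card e = 2"
    "\<forall>x\<in>V1. 2 \<le> degree E1 x" "\<forall>x\<in>V2. 2 \<le> degree E2 x"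
    using join_net.IH unfolding net_wf_def by auto
  have uv: "u \<in> V1" "u' \<in> V1" "v \<in> V2" "v' \<in> V2" using join_net.hyps unfolding corners_def by auto
  have "u \<noteq> v" "u' \<noteq> v'" using uv join_net.hyps(3) by blast+
  then have edges: "\<forall>e\<in>E1 \<union> E2 \<union> {{u, v}, {u', v'}}. e \<subseteq> V1 \<union> V2 \<and> card e = 2"
    using wf(5,6) uv by auto
  have "2 \<le> degree (E1 \<union> E2 \<union> {{u, v}, {u', v'}}) x" if "x \<in> V1 \<union> V2" for x
  proof -
    have "2 \<le> degree E1 x + degree E2 x" using that wf(7,8) by fastforce
    then show ?thesis
      using degree_join[OF join_net.hyps(3) _ _ wf(3,4) uv(1,2) join_net.hyps(6) uv(3,4) join_net.hyps(9)]
        wf(5,6) by simp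
  qed
  with edges wf(1-4) show ?case unfolding net_wf_def by simp
next
  case (join_edge V1 E1 a b u u')
  have wf: "finite V1" "finite E1" "\<forall>e\<in>E1. e \<subseteq> V1 \<and> card e = 2" "\<forall>x\<in>V1. 2 \<le> degree E1 x"
    using join_edge.IH unfolding net_wf_def by auto
  have uv: "u \<in> V1" "u' \<in> V1" using join_edge.hyps unfolding corners_def by auto
  have V12: "V1 \<inter> {a, b} = {}" using join_edge.hyps by blast
  have "u \<noteq> a" "u' \<noteq> b" using uv join_edge.hyps by blast+
  then have edges: "\<forall>e\<in>E1 \<union> {{a, b}} \<union> {{u, a}, {u', b}}. e \<subseteq> V1 \<union> {a, b} \<and> card e = 2"
    using wf(3) uv join_edge.hyps(2) by auto
  have "2 \<le> degree (E1 \<union> {{a, b}} \<union> {{u, a}, {u', b}}) x" if "x \<in> V1 \<union> {a, b}" for x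
    using degree_join[OF V12 _ _ wf(2) _ uv join_edge.hyps(7) _ _ join_edge.hyps(2), of "{{a, b}}" x]
      degree_single_edge[of a b x] wf(3,4) that by fastforce
  with edges wf(1,2) show ?case unfolding net_wf_def by simp
qed

section \<open>The numerical invariant\<close>

definition triangle :: "int \<Rightarrow> int \<Rightarrow> int \<Rightarrow> bool" where
  "triangle x y w \<longleftrightarrow> x \<le> y + w \<and> y \<le> x + w \<and> w \<le> x + y"

lemma triangle_perm: "triangle x y w \<Longrightarrow> triangle y x w" "triangle x y w \<Longrightarrow> triangle x w y"
  unfolding triangle_def by auto

lemma triangle_combine:
  assumes A: "triangle a1 a2 x" and B: "triangle b1 b2 y"
    and nonneg: "0 \<le> a1" "0 \<le> a2" "0 \<le> b1" "0 \<le> b2"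
    and diff: "g1 - g2 = (a1 - a2) * (b1 - b2)"
    and lower: "a1 * b1 + a2 * b2 \<le> g1" "a2 * b1 + a1 * b2 \<le> g2"
  shows "triangle g1 g2 (x * y)"
proof -
  have "\<bar>a1 - a2\<bar> \<le> x" "\<bar>b1 - b2\<bar> \<le> y" "x \<le> a1 + a2" "y \<le> b1 + b2"
    using A B unfolding triangle_def by auto
  then have "\<bar>(a1 - a2) * (b1 - b2)\<bar> \<le> x * y" "x * y \<le> (a1 + a2) * (b1 + b2)"
    unfolding abs_mult by (auto intro!: mult_mono)
  moreover have "(a1 + a2) * (b1 + b2) = (a1 * b1 + a2 * b2) + (a2 * b1 + a1 * b2)"
    by (simp add: algebra_simps)
  ultimately show ?thesis using diff lower unfolding triangle_def by auto
qed

lemma four_products_le: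
  fixes a1 a2 b1 b2 :: int
  assumes "0 \<le> a1" "0 \<le> a2" "0 \<le> b1" "0 \<le> b2"
  shows "4 * (a1 * a2) * (b1 * b2) \<le> (a1 * b1 + a2 * b2) * (a2 * b1 + a1 * b2)"
proof -
  have "(a1 * b1 + a2 * b2) * (a2 * b1 + a1 * b2) - 4 * (a1 * a2) * (b1 * b2) =
      a1 * a2 * (b1 - b2)\<^sup>2 + b1 * b2 * (a1 - a2)\<^sup>2"
    by (simp add: power2_eq_square algebra_simps)
  moreover have "0 \<le> a1 * a2 * (b1 - b2)\<^sup>2 + b1 * b2 * (a1 - a2)\<^sup>2" using assms by simp
  ultimately show ?thesis by linarith
qed

lemma four_mult_le_square: "4 * a * b \<le> (a + b)\<^sup>2" for a b :: int
proof -
  have "(a + b)\<^sup>2 - 4 * a * b = (a - b)\<^sup>2" by (simp add: power2_eq_square algebra_simps)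
  then show ?thesis by (metis diff_ge_0_iff_ge zero_le_power2)
qed

lemma one_le_mult_int: "1 \<le> a \<Longrightarrow> 1 \<le> b \<Longrightarrow> (1::int) \<le> a * b"
  using mult_mono[of 1 a 1 b] by simp

lemma one_le_mult_add_int:
  "1 \<le> a \<Longrightarrow> 1 \<le> b \<Longrightarrow> 0 \<le> c \<Longrightarrow> 0 \<le> d \<Longrightarrow> (1::int) \<le> a * b + c * d"
  using one_le_mult_int[of a b] mult_nonneg_nonneg[of c d] by linarith

lemma power_two_add_minus_two:
  assumes "2 \<le> k" "2 \<le> l"
  shows "(2::int) ^ (k + l - 2) = 4 * (2 ^ (k - 2) * 2 ^ (l - 2))"
proof -
  obtain i j where "k = i + 2" "l = j + 2" using assms by (metis add.commute le_add_diff_inverse)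
  then show ?thesis by (simp add: power_add)
qed

definition good_counts :: "int \<Rightarrow> int \<Rightarrow> int \<Rightarrow> int \<Rightarrow> int \<Rightarrow> int \<Rightarrow> nat \<Rightarrow> bool" where
  "good_counts m11 m12 m21 m22 z p n \<longleftrightarrow>
     1 \<le> m11 \<and> 1 \<le> m12 \<and> 1 \<le> m21 \<and> 1 \<le> m22 \<and> 1 \<le> z \<and> 1 \<le> p \<and> 4 \<le> n \<and>
     triangle (m11 * m22) (m12 * m21) (p * z) \<and> 2 ^ (n - 2) \<le> m11 * m22 * (m12 * m21) * p\<^sup>2"

lemma good_counts_swap_rows: "good_counts m11 m12 m21 m22 z p n \<Longrightarrow> good_counts m21 m22 m11 m12 z p n"
  unfolding good_counts_def triangle_def by (simp add: algebra_simps)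

lemma good_counts_swap_cols: "good_counts m11 m12 m21 m22 z p n \<Longrightarrow> good_counts m12 m11 m22 m21 z p n"
  unfolding good_counts_def triangle_def by (simp add: algebra_simps)

lemma good_counts_transpose: "good_counts m11 m12 m21 m22 z p n \<Longrightarrow> good_counts m11 m21 m12 m22 z p n"
  unfolding good_counts_def triangle_def by (simp add: algebra_simps)

text \<open>Joining two nets by two edges from the A-corners of the first to the B-corners of the
  second preserves the invariant.\<close>
lemma good_counts_same_side:
  assumes T: "good_counts t11 t12 t21 t22 zt pt nt" and H: "good_counts h11 h12 h21 h22 zh ph nh"
  shows "good_counts (t11 * h11 + t21 * h12) (t12 * h11 + t22 * h12) (t11 * h21 + t21 * h22)
    (t12 * h21 + t22 * h22) (zt * zh) (pt * ph) (nt + nh)"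
proof -
  define a1 a2 b1 b2 where "a1 = t11 * t22" and "a2 = t12 * t21" and "b1 = h11 * h22" and "b2 = h12 * h21"
  define g1 g2 where "g1 = (t11 * h11 + t21 * h12) * (t12 * h21 + t22 * h22)"
    and "g2 = (t12 * h11 + t22 * h12) * (t11 * h21 + t21 * h22)"
  have t: "1 \<le> t11" "1 \<le> t12" "1 \<le> t21" "1 \<le> t22" "1 \<le> zt" "1 \<le> pt" "4 \<le> nt"
    "triangle a1 a2 (pt * zt)" "2 ^ (nt - 2) \<le> a1 * a2 * pt\<^sup>2"
    using T unfolding good_counts_def a1_def a2_def by auto
  have h: "1 \<le> h11" "1 \<le> h12" "1 \<le> h21" "1 \<le> h22" "1 \<le> zh" "1 \<le> ph" "4 \<le> nh"
    "triangle b1 b2 (ph * zh)" "2 ^ (nh - 2) \<le> b1 * b2 * ph\<^sup>2"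
    using H unfolding good_counts_def b1_def b2_def by auto
  have nonneg: "0 \<le> a1" "0 \<le> a2" "0 \<le> b1" "0 \<le> b2"
    using t h unfolding a1_def a2_def b1_def b2_def by simp_all
  have lower: "a1 * b1 + a2 * b2 \<le> g1" "a2 * b1 + a1 * b2 \<le> g2"
    using t h unfolding a1_def a2_def b1_def b2_def g1_def g2_def by (simp_all add: algebra_simps)
  have "g1 - g2 = (a1 - a2) * (b1 - b2)"
    unfolding a1_def a2_def b1_def b2_def g1_def g2_def by (simp add: algebra_simps)
  from triangle_combine[OF t(8) h(8) nonneg this lower]
  have tri: "triangle g1 g2 (pt * ph * (zt * zh))" by (simp add: algebra_simps)
  have "(2::int) ^ (nt + nh - 2) = 4 * (2 ^ (nt - 2) * 2 ^ (nh - 2))"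
    using t(7) h(7) by (intro power_two_add_minus_two) auto
  also have "\<dots> \<le> 4 * ((a1 * a2 * pt\<^sup>2) * (b1 * b2 * ph\<^sup>2))"
    using t(9) h(9) nonneg by (intro mult_left_mono mult_mono) simp_all
  also have "\<dots> = 4 * (a1 * a2) * (b1 * b2) * (pt * ph)\<^sup>2" by (simp add: power2_eq_square algebra_simps)
  also have "\<dots> \<le> (a1 * b1 + a2 * b2) * (a2 * b1 + a1 * b2) * (pt * ph)\<^sup>2"
    using four_products_le[OF nonneg] by (intro mult_right_mono) auto
  also have "\<dots> \<le> g1 * g2 * (pt * ph)\<^sup>2"
  proof (intro mult_right_mono mult_mono)
    show "0 \<le> g1" using lower(1) nonneg by (meson add_nonneg_nonneg mult_nonneg_nonneg order_trans)
    show "0 \<le> a2 * b1 + a1 * b2" using nonneg by simp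
  qed (use lower in simp_all)
  finally have growth: "(2::int) ^ (nt + nh - 2) \<le> g1 * g2 * (pt * ph)\<^sup>2" .
  have "1 \<le> zt * zh" "1 \<le> pt * ph" using t h by (auto intro: one_le_mult_int)
  moreover have "1 \<le> t11 * h11 + t21 * h12" "1 \<le> t12 * h11 + t22 * h12"
    "1 \<le> t11 * h21 + t21 * h22" "1 \<le> t12 * h21 + t22 * h22"
    using t h by (auto intro: one_le_mult_add_int)
  ultimately show ?thesis
    using tri growth t(7) unfolding good_counts_def g1_def g2_def by (simp add: algebra_simps)
qed

text \<open>Joining two nets by one edge from an A-corner and one edge from a B-corner of the first
  preserves the invariant.\<close>
lemma good_counts_mixed:
  assumes T: "good_counts t11 t12 t21 t22 zt pt nt" and H: "good_counts h11 h12 h21 h22 zh ph nh"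
  shows "good_counts (t22 * ph + zt * h11) (t21 * h12) (t12 * h21) (pt * h22 + t11 * zh)
    (t22 * h22 + zt * zh) (pt * ph + t11 * h11) (nt + nh)"
proof -
  define a1 a2 b1 b2 where "a1 = t11 * t22" and "a2 = t12 * t21" and "b1 = h11 * h22" and "b2 = h12 * h21"
  define x y where "x = pt * zt" and "y = ph * zh"
  define g p where "g = (t22 * ph + zt * h11) * (pt * h22 + t11 * zh)"
    and "p = (pt * ph + t11 * h11) * (t22 * h22 + zt * zh)"
  have t: "1 \<le> t11" "1 \<le> t12" "1 \<le> t21" "1 \<le> t22" "1 \<le> zt" "1 \<le> pt" "4 \<le> nt"
    "triangle a1 a2 x" "2 ^ (nt - 2) \<le> a1 * a2 * pt\<^sup>2"
    using T unfolding good_counts_def a1_def a2_def x_def by auto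
  have h: "1 \<le> h11" "1 \<le> h12" "1 \<le> h21" "1 \<le> h22" "1 \<le> zh" "1 \<le> ph" "4 \<le> nh"
    "triangle b1 b2 y" "2 ^ (nh - 2) \<le> b1 * b2 * ph\<^sup>2"
    using H unfolding good_counts_def b1_def b2_def y_def by auto
  have nonneg: "0 \<le> x" "0 \<le> a1" "0 \<le> y" "0 \<le> b1" "0 \<le> a2" "0 \<le> b2"
    using t h unfolding a1_def a2_def b1_def b2_def x_def y_def by simp_all
  have g_split: "g = a1 * y + x * b1 + (t22 * h22 * (pt * ph) + t11 * h11 * zt * zh)"
    unfolding g_def a1_def b1_def x_def y_def by (simp add: algebra_simps)
  have lower: "x * y + a1 * b1 \<le> p" "a1 * y + x * b1 \<le> g"
    using t h unfolding g_split unfolding a1_def b1_def x_def y_def p_def by (simp_all add: algebra_simps)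
  have "p - g = (x - a1) * (y - b1)"
    unfolding p_def g_def a1_def b1_def x_def y_def by (simp add: algebra_simps)
  from triangle_combine[OF _ _ nonneg(1-4) this lower] t(8) h(8)
  have "triangle p g (a2 * b2)" by (meson triangle_perm)
  then have tri: "triangle g (t21 * h12 * (t12 * h21)) p"
    unfolding a2_def b2_def by (metis triangle_perm mult.commute mult.left_commute)
  have "0 \<le> t11 * h11 * zt * zh" using t h by (intro mult_nonneg_nonneg) auto
  then have g_lower: "t22 * h22 * (pt * ph) \<le> g"
    using nonneg unfolding g_split by (simp add: add_nonneg_nonneg)
  have "0 \<le> t22 * h22 * (pt * ph)" using t h by simp
  with g_lower have g_nonneg: "0 \<le> g" by linarith
  have "(2::int) ^ (nt + nh - 2) = 4 * (2 ^ (nt - 2) * 2 ^ (nh - 2))"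
    using t(7) h(7) by (intro power_two_add_minus_two) auto
  also have "\<dots> \<le> 4 * ((a1 * a2 * pt\<^sup>2) * (b1 * b2 * ph\<^sup>2))"
    using t(9) h(9) nonneg by (intro mult_left_mono mult_mono) simp_all
  also have "\<dots> = t22 * h22 * (pt * ph) * (a2 * b2) * (4 * (pt * ph) * (t11 * h11))"
    unfolding a1_def b1_def by (simp add: power2_eq_square algebra_simps)
  also have "\<dots> \<le> g * (a2 * b2) * (pt * ph + t11 * h11)\<^sup>2"
    using g_lower g_nonneg four_mult_le_square[of "pt * ph" "t11 * h11"] nonneg t h
    by (intro mult_mono) simp_all
  finally have growth: "(2::int) ^ (nt + nh - 2) \<le> g * (t21 * h12 * (t12 * h21)) * (pt * ph + t11 * h11)\<^sup>2"
    unfolding a2_def b2_def by (simp add: algebra_simps)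
  have "1 \<le> t22 * ph + zt * h11" "1 \<le> t21 * h12" "1 \<le> t12 * h21" "1 \<le> pt * h22 + t11 * zh"
    "1 \<le> t22 * h22 + zt * zh" "1 \<le> pt * ph + t11 * h11"
    using t h by (auto intro: one_le_mult_int one_le_mult_add_int)
  with tri growth t(7) show ?thesis unfolding good_counts_def g_def p_def by (simp add: algebra_simps)
qed

text \<open>Attaching a single edge preserves the invariant.\<close>
lemma good_counts_edge:
  assumes T: "good_counts t11 t12 t21 t22 z p n"
  shows "good_counts (t22 + z) t21 t12 p t22 (p + t11) (n + 2)"
proof -
  have t: "1 \<le> t11" "1 \<le> t12" "1 \<le> t21" "1 \<le> t22" "1 \<le> z" "1 \<le> p" "4 \<le> n"
    "triangle (t11 * t22) (t12 * t21) (p * z)" "2 ^ (n - 2) \<le> t11 * t22 * (t12 * t21) * p\<^sup>2"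
    using T unfolding good_counts_def by auto
  have "0 \<le> p * t22" using t by simp
  moreover have expand: "(t22 + z) * p = p * t22 + p * z" "(p + t11) * t22 = p * t22 + t11 * t22"
    by (simp add: algebra_simps)+
  ultimately have tri: "triangle ((t22 + z) * p) (t21 * t12) ((p + t11) * t22)"
    using t(8) unfolding triangle_def expand mult.commute[of t21 t12] by linarith
  have "(2::int) ^ (n + 2 - 2) = 4 * 2 ^ (n - 2)"
    using power_two_add_minus_two[of n 2] t(7) by simp
  also have "\<dots> \<le> 4 * (t11 * t22 * (t12 * t21) * p\<^sup>2)" using t(9) by simp
  also have "\<dots> = (t22 * p) * (t21 * t12) * (4 * p * t11)" by (simp add: power2_eq_square algebra_simps)
  also have "\<dots> \<le> ((t22 + z) * p) * (t21 * t12) * (p + t11)\<^sup>2"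
    using four_mult_le_square[of p t11] t by (intro mult_mono) simp_all
  finally have growth: "(2::int) ^ (n + 2 - 2) \<le> ((t22 + z) * p) * (t21 * t12) * (p + t11)\<^sup>2" .
  have "1 \<le> t22 + z" "1 \<le> p + t11" using t by simp_all
  with tri growth t show ?thesis unfolding good_counts_def by (simp add: algebra_simps)
qed

lemma good_counts_bound:
  assumes "good_counts m11 m12 m21 m22 z p n"
  shows "2 powr (real n / 18 - 2 / 9) \<le> real_of_int (max (max m11 m12) (max m21 m22))"
proof -
  define M where "M = max (max m11 m12) (max m21 m22)"
  have a: "1 \<le> m11" "1 \<le> m12" "1 \<le> m21" "1 \<le> m22" "1 \<le> z" "1 \<le> p" "4 \<le> n"
    "p * z \<le> m11 * m22 + m12 * m21" "2 ^ (n - 2) \<le> m11 * m22 * (m12 * m21) * p\<^sup>2"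
    using assms unfolding good_counts_def triangle_def by auto
  have M: "m11 \<le> M" "m12 \<le> M" "m21 \<le> M" "m22 \<le> M" "1 \<le> M" unfolding M_def using a by auto
  have d: "m11 * m22 \<le> M\<^sup>2" "m12 * m21 \<le> M\<^sup>2"
    using M a unfolding power2_eq_square by (intro mult_mono; simp)+
  have "p \<le> p * z" using a by simp
  also have "\<dots> \<le> 2 * M\<^sup>2" using a d by linarith
  finally have pM: "p \<le> 2 * M\<^sup>2" .
  obtain k where nk: "n = k + 4" using a(7) by (metis add.commute le_Suc_ex)
  have "4 * (2::int) ^ k = 2 ^ (n - 2)" using nk by (simp add: power_add)
  also have "\<dots> \<le> m11 * m22 * (m12 * m21) * p\<^sup>2" by (fact a(9))
  also have "\<dots> \<le> M\<^sup>2 * M\<^sup>2 * (2 * M\<^sup>2)\<^sup>2"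
    using d pM a by (intro mult_mono power_mono) auto
  also have "\<dots> = 4 * M ^ 8" by algebra
  finally have "(2::int) ^ k \<le> M ^ 8" by simp
  then have hr: "(2::real) ^ k \<le> real_of_int M ^ 8" by (metis of_int_le_iff of_int_numeral of_int_power)
  have e: "(2 powr (real k / 8)) ^ 8 = (2::real) ^ k"
    by (simp add: powr_realpow[symmetric] powr_powr)
  have "2 powr (real k / 8) \<le> real_of_int M"
  proof (rule power_le_imp_le_base[of _ 7])
    show "(2 powr (real k / 8)) ^ Suc 7 \<le> real_of_int M ^ Suc 7"
      using hr e by (simp add: numeral_eq_Suc[symmetric])
    show "0 \<le> real_of_int M" using M by simp
  qed
  moreover have "2 powr (real n / 18 - 2 / 9) \<le> 2 powr (real k / 8)"
    by (rule powr_mono) (use nk in \<open>auto simp: field_simps\<close>)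
  ultimately show ?thesis unfolding M_def by linarith
qed

section \<open>Labelled nets and the construction steps\<close>

definition labelled_net :: "'a set \<Rightarrow> 'a set set \<Rightarrow> 'a \<Rightarrow> 'a \<Rightarrow> 'a \<Rightarrow> 'a \<Rightarrow> bool" where
  "labelled_net V E a1 a2 b1 b2 \<longleftrightarrow> a1 \<noteq> a2 \<and> b1 \<noteq> b2 \<and> corners V E = {a1, a2, b1, b2} \<and>
     good_counts (int (nmatch E (V - {a1, b1}))) (int (nmatch E (V - {a1, b2})))
       (int (nmatch E (V - {a2, b1}))) (int (nmatch E (V - {a2, b2})))
       (int (nmatch E (V - {a1, a2, b1, b2}))) (int (nmatch E V)) (card V)"

lemma labelled_net_counts:
  "labelled_net V E a1 a2 b1 b2 \<Longrightarrow>
    good_counts (int (nmatch E (V - {a1, b1}))) (int (nmatch E (V - {a1, b2})))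
       (int (nmatch E (V - {a2, b1}))) (int (nmatch E (V - {a2, b2})))
       (int (nmatch E (V - {a1, a2, b1, b2}))) (int (nmatch E V)) (card V)"
  unfolding labelled_net_def by simp

lemma labelled_net_perfect: "labelled_net V E a1 a2 b1 b2 \<Longrightarrow> 0 < nmatch E V"
  using labelled_net_counts unfolding good_counts_def by fastforce

lemma labelled_net_corners:
  assumes "labelled_net V E a1 a2 b1 b2"
  shows "corners V E = {a1, a2, b1, b2}" "a1 \<noteq> a2" "b1 \<noteq> b2" "a1 \<in> V" "a2 \<in> V" "b1 \<in> V" "b2 \<in> V"
  using assms unfolding labelled_net_def corners_def by auto

lemma labelled_net_unbalanced:
  assumes L: "labelled_net V E a1 a2 b1 b2" and wf: "net_wf V E"
    and AB: "\<forall>e\<in>E. card (e \<inter> A) = 1 \<and> card (e \<inter> B) = 1"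
    and R: "R \<subseteq> V" "card (R \<inter> A) \<noteq> card (R \<inter> B)"
  shows "nmatch E (V - R) = 0"
  using nmatch_delete_unbalanced[OF _ _ AB labelled_net_perfect[OF L] R] wf unfolding net_wf_def by blast

context
  fixes V1 V2 :: "'a set" and E1 E2 :: "'a set set" and A B :: "'a set"
    and a1 a2 b1 b2 c1 c2 d1 d2 :: 'a
  assumes AB: "\<forall>e\<in>E1 \<union> E2. card (e \<inter> A) = 1 \<and> card (e \<inter> B) = 1" "A \<inter> B = {}"
    and wf: "net_wf V1 E1" "net_wf V2 E2" and V12: "V1 \<inter> V2 = {}"
    and T: "labelled_net V1 E1 a1 a2 b1 b2" and H: "labelled_net V2 E2 c1 c2 d1 d2"
    and cls: "a1 \<in> A" "a2 \<in> A" "b1 \<in> B" "b2 \<in> B" "c1 \<in> A" "c2 \<in> A" "d1 \<in> B" "d2 \<in> B"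
begin

lemma join2_corner_facts:
  shows "a1 \<in> V1" "a2 \<in> V1" "b1 \<in> V1" "b2 \<in> V1" "c1 \<in> V2" "c2 \<in> V2" "d1 \<in> V2" "d2 \<in> V2"
    and "a1 \<notin> V2" "a2 \<notin> V2" "b1 \<notin> V2" "b2 \<notin> V2" "c1 \<notin> V1" "c2 \<notin> V1" "d1 \<notin> V1" "d2 \<notin> V1"
    and "b1 \<notin> A" "b2 \<notin> A" "d1 \<notin> A" "d2 \<notin> A" "a1 \<notin> B" "a2 \<notin> B" "c1 \<notin> B" "c2 \<notin> B"
    and "a1 \<noteq> a2" "b1 \<noteq> b2" "c1 \<noteq> c2" "d1 \<noteq> d2"
    and "a1 \<noteq> b1" "a1 \<noteq> b2" "a2 \<noteq> b1" "a2 \<noteq> b2" "c1 \<noteq> d1" "c1 \<noteq> d2" "c2 \<noteq> d1" "c2 \<noteq> d2"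
    and "b1 \<noteq> a1" "b2 \<noteq> a1" "b1 \<noteq> a2" "b2 \<noteq> a2" "d1 \<noteq> c1" "d2 \<noteq> c1" "d1 \<noteq> c2" "d2 \<noteq> c2"
proof -
  note cT = labelled_net_corners[OF T] and cH = labelled_net_corners[OF H]
  have sep: "\<And>x. x \<in> V1 \<Longrightarrow> x \<notin> V2" "\<And>x. x \<in> B \<Longrightarrow> x \<notin> A" "\<And>x. x \<in> A \<Longrightarrow> x \<notin> B"
    using V12 AB(2) by blast+
  show "a1 \<in> V1" "a2 \<in> V1" "b1 \<in> V1" "b2 \<in> V1" "c1 \<in> V2" "c2 \<in> V2" "d1 \<in> V2" "d2 \<in> V2"
    "a1 \<noteq> a2" "b1 \<noteq> b2" "c1 \<noteq> c2" "d1 \<noteq> d2" using cT cH by simp_all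
  then show "a1 \<notin> V2" "a2 \<notin> V2" "b1 \<notin> V2" "b2 \<notin> V2" "c1 \<notin> V1" "c2 \<notin> V1" "d1 \<notin> V1" "d2 \<notin> V1"
    using sep(1) by auto
  show nc: "b1 \<notin> A" "b2 \<notin> A" "d1 \<notin> A" "d2 \<notin> A" "a1 \<notin> B" "a2 \<notin> B" "c1 \<notin> B" "c2 \<notin> B"
    using sep(2,3) cls by auto
  show "a1 \<noteq> b1" "a1 \<noteq> b2" "a2 \<noteq> b1" "a2 \<noteq> b2" "c1 \<noteq> d1" "c1 \<noteq> d2" "c2 \<noteq> d1" "c2 \<noteq> d2"
    "b1 \<noteq> a1" "b2 \<noteq> a1" "b1 \<noteq> a2" "b2 \<noteq> a2" "d1 \<noteq> c1" "d2 \<noteq> c1" "d1 \<noteq> c2" "d2 \<noteq> c2"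
    using nc cls by auto
qed

lemma join2_unbalanced: "R \<subseteq> V1 \<Longrightarrow> card (R \<inter> A) \<noteq> card (R \<inter> B) \<Longrightarrow> nmatch E1 (V1 - R) = 0"
  using labelled_net_unbalanced[OF T wf(1)] AB(1) by blast

lemma same_side_count_pair:
  assumes x: "x \<in> V2" "x \<in> A" and y: "y \<in> V1" "y \<in> B"
  shows "nmatch (E1 \<union> E2 \<union> {{a1, d1}, {a2, d2}}) (V1 \<union> V2 - {x, y}) =
      nmatch E1 (V1 - {a1, y}) * nmatch E2 (V2 - {x, d1}) + nmatch E1 (V1 - {a2, y}) * nmatch E2 (V2 - {x, d2})"
proof -
  note facts = join2_corner_facts
  have "x \<notin> B" "y \<notin> A" "y \<noteq> a1" "y \<noteq> a2" "x \<noteq> d1" "x \<noteq> d2" "x \<notin> V1" "y \<notin> V2"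
    using x y cls AB(2) V12 by blast+
  then show ?thesis
    using nmatch_join[OF V12 net_wf_parts(3)[OF wf(1)] net_wf_parts(4)[OF wf(2)] net_wf_parts(2)[OF wf(1)]
        net_wf_parts(2)[OF wf(2)] facts(1,2,25,7,8,28), of "{x, y}"] x y facts cls
    by (simp add: join2_unbalanced Int_insert_left insert_commute)
qed

lemma same_side_counts:
  defines "E \<equiv> E1 \<union> E2 \<union> {{a1, d1}, {a2, d2}}"
  shows "nmatch E (V1 \<union> V2 - {c1, c2, b1, b2}) =
      nmatch E1 (V1 - {a1, a2, b1, b2}) * nmatch E2 (V2 - {c1, c2, d1, d2})"
    and "nmatch E (V1 \<union> V2) = nmatch E1 V1 * nmatch E2 V2"
proof -
  note facts = join2_corner_facts
  note join = nmatch_join[OF V12 net_wf_parts(3)[OF wf(1)] net_wf_parts(4)[OF wf(2)]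
      net_wf_parts(2)[OF wf(1)] net_wf_parts(2)[OF wf(2)] facts(1,2,25,7,8,28), folded E_def]
  have "nmatch E1 (V1 - {b1, b2}) = 0" "nmatch E1 (V1 - {a1, b1, b2}) = 0"
    "nmatch E1 (V1 - {a2, b1, b2}) = 0"
    using facts cls by (simp_all add: join2_unbalanced Int_insert_left)
  moreover have "{d1, d2, c1, c2} = {c1, c2, d1, d2}" by blast
  ultimately show "nmatch E (V1 \<union> V2 - {c1, c2, b1, b2}) =
      nmatch E1 (V1 - {a1, a2, b1, b2}) * nmatch E2 (V2 - {c1, c2, d1, d2})"
    using join[of "{c1, c2, b1, b2}"] facts by (simp add: Int_insert_left)
  show "nmatch E (V1 \<union> V2) = nmatch E1 V1 * nmatch E2 V2"
    using join[of "{}"] facts cls by (simp add: join2_unbalanced Int_insert_left insert_commute)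
qed

lemma labelled_join_same_side: "labelled_net (V1 \<union> V2) (E1 \<union> E2 \<union> {{a1, d1}, {a2, d2}}) c1 c2 b1 b2"
proof -
  define E where "E = E1 \<union> E2 \<union> {{a1, d1}, {a2, d2}}"
  note facts = join2_corner_facts and pair = same_side_count_pair[folded E_def]
    and counts = same_side_counts[folded E_def]
  have corners: "corners (V1 \<union> V2) E = {c1, c2, b1, b2}"
  proof -
    have "corners (V1 \<union> V2) E = (corners V1 E1 - {a1, a2}) \<union> (corners V2 E2 - {d1, d2})"
      unfolding E_def using labelled_net_corners[OF T] labelled_net_corners[OF H]
      by (intro corners_join[OF wf V12]) auto
    also have "\<dots> = {c1, c2, b1, b2}"
      unfolding labelled_net_corners(1)[OF T] labelled_net_corners(1)[OF H] using facts by auto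
    finally show ?thesis .
  qed
  have "card (V1 \<union> V2) = card V1 + card V2"
    using net_wf_parts(1)[OF wf(1)] net_wf_parts(1)[OF wf(2)] V12 by (simp add: card_Un_disjoint)
  with good_counts_same_side[OF labelled_net_counts[OF T] labelled_net_counts[OF H]]
  have "good_counts (int (nmatch E (V1 \<union> V2 - {c1, b1}))) (int (nmatch E (V1 \<union> V2 - {c1, b2})))
       (int (nmatch E (V1 \<union> V2 - {c2, b1}))) (int (nmatch E (V1 \<union> V2 - {c2, b2})))
       (int (nmatch E (V1 \<union> V2 - {c1, c2, b1, b2}))) (int (nmatch E (V1 \<union> V2))) (card (V1 \<union> V2))"
    unfolding pair[OF facts(5) cls(5) facts(3) cls(3)] pair[OF facts(5) cls(5) facts(4) cls(4)]
      pair[OF facts(6) cls(6) facts(3) cls(3)] pair[OF facts(6) cls(6) facts(4) cls(4)] counts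
    by (simp add: algebra_simps)
  with corners facts show ?thesis unfolding labelled_net_def E_def by simp
qed

lemma mixed_counts:
  defines "E \<equiv> E1 \<union> E2 \<union> {{a1, d1}, {b1, c1}}"
  shows "nmatch E (V1 \<union> V2 - {a2, b2}) = nmatch E1 (V1 - {a2, b2}) * nmatch E2 V2
      + nmatch E1 (V1 - {a1, a2, b1, b2}) * nmatch E2 (V2 - {c1, d1})"
    and "nmatch E (V1 \<union> V2 - {a2, d2}) = nmatch E1 (V1 - {a2, b1}) * nmatch E2 (V2 - {c1, d2})"
    and "nmatch E (V1 \<union> V2 - {c2, b2}) = nmatch E1 (V1 - {a1, b2}) * nmatch E2 (V2 - {c2, d1})"
    and "nmatch E (V1 \<union> V2 - {c2, d2}) = nmatch E1 V1 * nmatch E2 (V2 - {c2, d2})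
      + nmatch E1 (V1 - {a1, b1}) * nmatch E2 (V2 - {c1, c2, d1, d2})"
    and "nmatch E (V1 \<union> V2 - {a2, c2, b2, d2}) = nmatch E1 (V1 - {a2, b2}) * nmatch E2 (V2 - {c2, d2})
      + nmatch E1 (V1 - {a1, a2, b1, b2}) * nmatch E2 (V2 - {c1, c2, d1, d2})"
    and "nmatch E (V1 \<union> V2) = nmatch E1 V1 * nmatch E2 V2 + nmatch E1 (V1 - {a1, b1}) * nmatch E2 (V2 - {c1, d1})"
proof -
  note facts = join2_corner_facts
  note join = nmatch_join[OF V12 net_wf_parts(3)[OF wf(1)] net_wf_parts(4)[OF wf(2)]
      net_wf_parts(2)[OF wf(1)] net_wf_parts(2)[OF wf(2)] facts(1,3,29,7,5,41), folded E_def]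
  have sets: "{a1, b1, a2, b2} = {a1, a2, b1, b2}" "{d1, c1} = {c1, d1}" "{b1, a2} = {a2, b1}"
    "{d1, c2} = {c2, d1}" "{d1, c1, c2, d2} = {c1, c2, d1, d2}" by blast+
  have zeros: "nmatch E1 (V1 - {a1}) = 0" "nmatch E1 (V1 - {b1}) = 0" "nmatch E1 (V1 - {a2}) = 0"
    "nmatch E1 (V1 - {b2}) = 0" "nmatch E1 (V1 - {a1, a2}) = 0" "nmatch E1 (V1 - {b1, b2}) = 0"
    "nmatch E1 (V1 - {a1, a2, b2}) = 0" "nmatch E1 (V1 - {b1, a2, b2}) = 0"
    "nmatch E1 (V1 - {a1, b1, a2}) = 0" "nmatch E1 (V1 - {a1, b1, b2}) = 0"
    using facts cls by (simp_all add: join2_unbalanced Int_insert_left)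
  note eval = facts sets zeros
  show "nmatch E (V1 \<union> V2 - {a2, b2}) = nmatch E1 (V1 - {a2, b2}) * nmatch E2 V2
      + nmatch E1 (V1 - {a1, a2, b1, b2}) * nmatch E2 (V2 - {c1, d1})"
    using join[of "{a2, b2}"] eval by (simp add: Int_insert_left)
  show "nmatch E (V1 \<union> V2 - {a2, d2}) = nmatch E1 (V1 - {a2, b1}) * nmatch E2 (V2 - {c1, d2})"
    using join[of "{a2, d2}"] eval by (simp add: Int_insert_left)
  show "nmatch E (V1 \<union> V2 - {c2, b2}) = nmatch E1 (V1 - {a1, b2}) * nmatch E2 (V2 - {c2, d1})"
    using join[of "{c2, b2}"] eval by (simp add: Int_insert_left)
  show "nmatch E (V1 \<union> V2 - {c2, d2}) = nmatch E1 V1 * nmatch E2 (V2 - {c2, d2})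
      + nmatch E1 (V1 - {a1, b1}) * nmatch E2 (V2 - {c1, c2, d1, d2})"
    using join[of "{c2, d2}"] eval by (simp add: Int_insert_left)
  show "nmatch E (V1 \<union> V2 - {a2, c2, b2, d2}) = nmatch E1 (V1 - {a2, b2}) * nmatch E2 (V2 - {c2, d2})
      + nmatch E1 (V1 - {a1, a2, b1, b2}) * nmatch E2 (V2 - {c1, c2, d1, d2})"
    using join[of "{a2, c2, b2, d2}"] eval by (simp add: Int_insert_left)
  show "nmatch E (V1 \<union> V2) = nmatch E1 V1 * nmatch E2 V2 + nmatch E1 (V1 - {a1, b1}) * nmatch E2 (V2 - {c1, d1})"
    using join[of "{}"] eval by (simp add: Int_insert_left)
qed

lemma labelled_join_mixed: "labelled_net (V1 \<union> V2) (E1 \<union> E2 \<union> {{a1, d1}, {b1, c1}}) a2 c2 b2 d2"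
proof -
  define E where "E = E1 \<union> E2 \<union> {{a1, d1}, {b1, c1}}"
  note facts = join2_corner_facts and counts = mixed_counts[folded E_def]
  have corners: "corners (V1 \<union> V2) E = {a2, c2, b2, d2}"
  proof -
    have "corners (V1 \<union> V2) E = (corners V1 E1 - {a1, b1}) \<union> (corners V2 E2 - {d1, c1})"
      unfolding E_def using labelled_net_corners[OF T] labelled_net_corners[OF H] facts
      by (intro corners_join[OF wf V12]) auto
    also have "\<dots> = {a2, c2, b2, d2}"
      unfolding labelled_net_corners(1)[OF T] labelled_net_corners(1)[OF H] using facts by auto
    finally show ?thesis .
  qed
  have "card (V1 \<union> V2) = card V1 + card V2"
    using net_wf_parts(1)[OF wf(1)] net_wf_parts(1)[OF wf(2)] V12 by (simp add: card_Un_disjoint)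
  with good_counts_mixed[OF labelled_net_counts[OF T] labelled_net_counts[OF H]]
  have "good_counts (int (nmatch E (V1 \<union> V2 - {a2, b2}))) (int (nmatch E (V1 \<union> V2 - {a2, d2})))
       (int (nmatch E (V1 \<union> V2 - {c2, b2}))) (int (nmatch E (V1 \<union> V2 - {c2, d2})))
       (int (nmatch E (V1 \<union> V2 - {a2, c2, b2, d2}))) (int (nmatch E (V1 \<union> V2))) (card (V1 \<union> V2))"
    unfolding counts by (simp add: algebra_simps)
  moreover have "a2 \<noteq> c2" "b2 \<noteq> d2" using facts by blast+
  ultimately show ?thesis using corners unfolding labelled_net_def E_def by simp
qed

end

context
  fixes V1 :: "'a set" and E1 :: "'a set set" and A B :: "'a set" and a1 a2 b1 b2 a b :: 'a
  assumes AB: "\<forall>e\<in>E1. card (e \<inter> A) = 1 \<and> card (e \<inter> B) = 1" "A \<inter> B = {}"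
    and wf: "net_wf V1 E1" and ab: "a \<noteq> b" "a \<notin> V1" "b \<notin> V1"
    and T: "labelled_net V1 E1 a1 a2 b1 b2"
    and cls: "a1 \<in> A" "a2 \<in> A" "b1 \<in> B" "b2 \<in> B" "a \<in> B" "b \<in> A"
begin

lemma edge_counts:
  defines "E \<equiv> E1 \<union> {{a, b}} \<union> {{a1, a}, {b1, b}}"
  shows "nmatch E (V1 \<union> {a, b} - {a2, b2}) = nmatch E1 (V1 - {a2, b2}) + nmatch E1 (V1 - {a1, a2, b1, b2})"
    and "nmatch E (V1 \<union> {a, b} - {a2, a}) = nmatch E1 (V1 - {a2, b1})"
    and "nmatch E (V1 \<union> {a, b} - {b, b2}) = nmatch E1 (V1 - {a1, b2})"
    and "nmatch E (V1 \<union> {a, b} - {b, a}) = nmatch E1 V1"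
    and "nmatch E (V1 \<union> {a, b} - {a2, b, b2, a}) = nmatch E1 (V1 - {a2, b2})"
    and "nmatch E (V1 \<union> {a, b}) = nmatch E1 V1 + nmatch E1 (V1 - {a1, b1})"
proof -
  note cT = labelled_net_corners[OF T]
  have notA: "b1 \<notin> A" "b2 \<notin> A" "a \<notin> A" and notB: "a1 \<notin> B" "a2 \<notin> B" "b \<notin> B"
    using cls AB(2) by blast+
  have "a1 \<noteq> b1" "a1 \<noteq> b2" "a2 \<noteq> b1" "a2 \<noteq> b2" "a \<noteq> b" using cls notA by blast+
  note dist = this this[THEN not_sym] cT(2,3)
  have zeros: "nmatch E1 (V1 - {a1}) = 0" "nmatch E1 (V1 - {b1}) = 0" "nmatch E1 (V1 - {a2}) = 0"
    "nmatch E1 (V1 - {b2}) = 0" "nmatch E1 (V1 - {a1, a2, b2}) = 0" "nmatch E1 (V1 - {b1, a2, b2}) = 0"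
    using cT(4-7) cls notA notB dist by (simp_all add: labelled_net_unbalanced[OF T wf AB(1)] Int_insert_left)
  have edge: "nmatch {{a, b}} {a, b} = 1" "nmatch {{a, b}} {} = 1" "nmatch {{a, b}} {a} = 0"
    "nmatch {{a, b}} {b} = 0"
    using nmatch_single_edge[OF ab(1)] nmatch_no_vertices[of "{{a, b}}"] by simp_all
  have out: "a1 \<notin> {a, b}" "a2 \<notin> {a, b}" "b1 \<notin> {a, b}" "b2 \<notin> {a, b}" using ab cT(4-7) by blast+
  have sets: "{a1, b1, a2, b2} = {a1, a2, b1, b2}" "{b1, a2} = {a2, b1}" by blast+
  have V12: "V1 \<inter> {a, b} = {}" using ab by blast
  have E2: "\<forall>e\<in>{{a, b}}. e \<subseteq> {a, b}" "finite {{a, b}}" "a \<in> {a, b}" "b \<in> {a, b}" by auto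
  note join = nmatch_join[OF V12 net_wf_parts(3)[OF wf] E2(1) net_wf_parts(2)[OF wf] E2(2)
      cT(4,6) dist(1) E2(3,4) ab(1), folded E_def]
  note eval = cT(4-7) ab out dist sets zeros edge
  show "nmatch E (V1 \<union> {a, b} - {a2, b2}) = nmatch E1 (V1 - {a2, b2}) + nmatch E1 (V1 - {a1, a2, b1, b2})"
    using join[of "{a2, b2}"] eval by (simp add: Int_insert_left)
  show "nmatch E (V1 \<union> {a, b} - {a2, a}) = nmatch E1 (V1 - {a2, b1})"
    using join[of "{a2, a}"] eval by (simp add: Int_insert_left)
  show "nmatch E (V1 \<union> {a, b} - {b, b2}) = nmatch E1 (V1 - {a1, b2})"
    using join[of "{b, b2}"] eval by (simp add: Int_insert_left)
  show "nmatch E (V1 \<union> {a, b} - {b, a}) = nmatch E1 V1"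
    using join[of "{b, a}"] eval by (simp add: Int_insert_left)
  show "nmatch E (V1 \<union> {a, b} - {a2, b, b2, a}) = nmatch E1 (V1 - {a2, b2})"
    using join[of "{a2, b, b2, a}"] eval by (simp add: Int_insert_left)
  show "nmatch E (V1 \<union> {a, b}) = nmatch E1 V1 + nmatch E1 (V1 - {a1, b1})"
    using join[of "{}"] eval by (simp add: Int_insert_left)
qed

lemma labelled_join_edge: "labelled_net (V1 \<union> {a, b}) (E1 \<union> {{a, b}} \<union> {{a1, a}, {b1, b}}) a2 b b2 a"
proof -
  define E where "E = E1 \<union> {{a, b}} \<union> {{a1, a}, {b1, b}}"
  note cT = labelled_net_corners[OF T] and counts = edge_counts[folded E_def]
  have dist: "a1 \<noteq> b1" "a2 \<noteq> b" "b2 \<noteq> a" using cls ab cT(5,7) AB(2) by blast+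
  have corners: "corners (V1 \<union> {a, b}) E = {a2, b, b2, a}"
  proof -
    have "corners (V1 \<union> {a, b}) E = (corners V1 E1 - {a1, b1}) \<union> {a, b}"
      unfolding E_def using cT dist by (intro corners_join_edge[OF wf ab]) auto
    also have "\<dots> = {a2, b, b2, a}" unfolding cT(1) using cT(2,3) dist cls AB(2) by auto
    finally show ?thesis .
  qed
  have "card (V1 \<union> {a, b}) = card V1 + 2"
    using net_wf_parts(1)[OF wf] ab by (simp add: card_Un_disjoint)
  with good_counts_edge[OF labelled_net_counts[OF T]]
  have "good_counts (int (nmatch E (V1 \<union> {a, b} - {a2, b2}))) (int (nmatch E (V1 \<union> {a, b} - {a2, a})))
       (int (nmatch E (V1 \<union> {a, b} - {b, b2}))) (int (nmatch E (V1 \<union> {a, b} - {b, a})))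
       (int (nmatch E (V1 \<union> {a, b} - {a2, b, b2, a}))) (int (nmatch E (V1 \<union> {a, b})))
       (card (V1 \<union> {a, b}))"
    unfolding counts by (simp add: algebra_simps)
  with corners dist show ?thesis unfolding labelled_net_def E_def by simp
qed

end

text \<open>The 4-cycle is labelled, with counts 1, 1, 1, 1, 1, 2.\<close>
lemma labelled_cycle:
  assumes "distinct [a, b, c, d]"
  shows "labelled_net {a, b, c, d} {{a, b}, {b, c}, {c, d}, {d, a}} a c b d"
proof -
  have dist: "a \<noteq> b" "a \<noteq> c" "a \<noteq> d" "b \<noteq> c" "b \<noteq> d" "c \<noteq> d" using assms by auto
  define E where "E = {{a, b}} \<union> {{c, d}} \<union> {{b, c}, {a, d}}"
  have E_eq: "{{a, b}, {b, c}, {c, d}, {d, a}} = E" unfolding E_def by (auto simp: insert_commute)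
  have V_eq: "{a, b, c, d} = {a, b} \<union> {c, d}" by auto
  have V12: "{a, b} \<inter> {c, d} = {}" using dist by auto
  have E12: "\<forall>e\<in>{{a, b}}. e \<subseteq> {a, b} \<and> e \<noteq> {}" "\<forall>e\<in>{{c, d}}. e \<subseteq> {c, d}" by auto
  have ends: "finite {{a, b}}" "finite {{c, d}}" "b \<in> {a, b}" "a \<in> {a, b}" "c \<in> {c, d}" "d \<in> {c, d}"
    by auto
  note join = nmatch_join[OF V12 E12 ends(1,2,3,4) dist(1)[symmetric] ends(5,6) dist(6), folded E_def]
  have edges: "nmatch {{a, b}} {a, b} = 1" "nmatch {{a, b}} {} = 1" "nmatch {{a, b}} {a} = 0"
    "nmatch {{a, b}} {b} = 0" "nmatch {{c, d}} {c, d} = 1" "nmatch {{c, d}} {} = 1"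
    "nmatch {{c, d}} {c} = 0" "nmatch {{c, d}} {d} = 0"
    using nmatch_single_edge[OF dist(1)] nmatch_single_edge[OF dist(6)]
      nmatch_no_vertices[of "{{a, b}}"] nmatch_no_vertices[of "{{c, d}}"] by simp_all
  note eval = dist dist[THEN not_sym] edges
  have counts: "nmatch E ({a, b} \<union> {c, d} - {a, b}) = 1" "nmatch E ({a, b} \<union> {c, d} - {a, d}) = 1"
    "nmatch E ({a, b} \<union> {c, d} - {c, b}) = 1" "nmatch E ({a, b} \<union> {c, d} - {c, d}) = 1"
    "nmatch E ({a, b} \<union> {c, d} - {a, c, b, d}) = 1" "nmatch E ({a, b} \<union> {c, d}) = 2"
    using join[of "{a, b}"] join[of "{a, d}"] join[of "{c, b}"] join[of "{c, d}"]
      join[of "{a, c, b, d}"] join[of "{}"] eval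
    by (simp_all add: Int_insert_left insert_Diff_if)
  have "corners {a, b, c, d} {{a, b}, {b, c}, {c, d}, {d, a}} = {a, c, b, d}"
    using degree_cycle4[OF assms] unfolding corners_def by auto
  moreover have "good_counts 1 1 1 1 1 2 (card ({a, b} \<union> {c, d}))"
    using dist unfolding good_counts_def triangle_def by simp
  ultimately show ?thesis
    using counts dist unfolding labelled_net_def E_eq V_eq by (simp add: insert_commute)
qed

section \<open>Induction over twisted nets\<close>

definition proper_colouring :: "'a set set \<Rightarrow> 'a set \<Rightarrow> 'a set \<Rightarrow> bool" where
  "proper_colouring E A B \<longleftrightarrow> A \<inter> B = {} \<and> (\<forall>e\<in>E. card (e \<inter> A) = 1 \<and> card (e \<inter> B) = 1)"

lemma proper_colouring_swap: "proper_colouring E A B \<Longrightarrow> proper_colouring E B A"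
  unfolding proper_colouring_def by blast

lemma proper_colouring_subset: "proper_colouring E A B \<Longrightarrow> E' \<subseteq> E \<Longrightarrow> proper_colouring E' A B"
  unfolding proper_colouring_def by blast

lemma edge_colours:
  assumes "proper_colouring E A B" "{x, y} \<in> E"
  shows "x \<in> A \<or> x \<in> B" "x \<in> A \<longleftrightarrow> y \<in> B" "x \<in> B \<longleftrightarrow> y \<in> A"
proof -
  have AB: "A \<inter> B = {}" "card ({x, y} \<inter> A) = 1" "card ({x, y} \<inter> B) = 1"
    using assms unfolding proper_colouring_def by auto
  then show "x \<in> A \<or> x \<in> B" "x \<in> A \<longleftrightarrow> y \<in> B" "x \<in> B \<longleftrightarrow> y \<in> A"
    by (cases "x \<in> A"; cases "y \<in> A"; cases "x \<in> B"; cases "y \<in> B"; auto simp: Int_insert_left)+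
qed

lemma labelled_net_swap_A: "labelled_net V E a1 a2 b1 b2 \<Longrightarrow> labelled_net V E a2 a1 b1 b2"
proof -
  have "{a2, a1, b1, b2} = {a1, a2, b1, b2}" by blast
  then show "labelled_net V E a1 a2 b1 b2 \<Longrightarrow> labelled_net V E a2 a1 b1 b2"
    using good_counts_swap_rows unfolding labelled_net_def by (simp add: eq_commute[of a2 a1])
qed

lemma labelled_net_swap_B: "labelled_net V E a1 a2 b1 b2 \<Longrightarrow> labelled_net V E a1 a2 b2 b1"
proof -
  have "{a1, a2, b2, b1} = {a1, a2, b1, b2}" by blast
  then show "labelled_net V E a1 a2 b1 b2 \<Longrightarrow> labelled_net V E a1 a2 b2 b1"
    using good_counts_swap_cols unfolding labelled_net_def by (simp add: eq_commute[of b2 b1])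
qed

lemma labelled_net_transpose: "labelled_net V E a1 a2 b1 b2 \<Longrightarrow> labelled_net V E b1 b2 a1 a2"
proof -
  have "{b1, b2, a1, a2} = {a1, a2, b1, b2}" "{b1, a1} = {a1, b1}" "{b1, a2} = {a2, b1}"
    "{b2, a1} = {a1, b2}" "{b2, a2} = {a2, b2}" by blast+
  then show "labelled_net V E a1 a2 b1 b2 \<Longrightarrow> labelled_net V E b1 b2 a1 a2"
    using good_counts_transpose unfolding labelled_net_def by simp
qed

lemma labelled_net_relabel:
  assumes L: "labelled_net V E a1 a2 b1 b2" and "{x, x'} = {a1, a2}" "{y, y'} = {b1, b2}"
  shows "labelled_net V E x x' y y'"
proof -
  have "(x = a1 \<and> x' = a2 \<or> x = a2 \<and> x' = a1) \<and> (y = b1 \<and> y' = b2 \<or> y = b2 \<and> y' = b1)"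
    using assms(2,3) by (simp add: doubleton_eq_iff)
  then show ?thesis
    using L labelled_net_swap_A[OF L] labelled_net_swap_B[OF L]
      labelled_net_swap_A[OF labelled_net_swap_B[OF L]] by (elim conjE disjE) simp_all
qed

lemma labelled_corner_colours:
  assumes L: "labelled_net V E a1 a2 b1 b2" and AB: "A \<inter> B = {}"
    and cls: "a1 \<in> A" "a2 \<in> A" "b1 \<in> B" "b2 \<in> B"
  shows "corners V E \<inter> A = {a1, a2}" "corners V E \<inter> B = {b1, b2}"
proof -
  have "b1 \<notin> A" "b2 \<notin> A" "a1 \<notin> B" "a2 \<notin> B" using AB cls by blast+
  then show "corners V E \<inter> A = {a1, a2}" "corners V E \<inter> B = {b1, b2}"
    using L cls unfolding labelled_net_def by (simp_all add: Int_insert_left)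
qed

definition has_labelling :: "'a set \<Rightarrow> 'a set set \<Rightarrow> 'a set \<Rightarrow> 'a set \<Rightarrow> bool" where
  "has_labelling V E A B \<longleftrightarrow>
     (\<exists>a1 a2 b1 b2. a1 \<in> A \<and> a2 \<in> A \<and> b1 \<in> B \<and> b2 \<in> B \<and> labelled_net V E a1 a2 b1 b2)"

lemma has_labelling_swap: "has_labelling V E A B \<Longrightarrow> has_labelling V E B A"
proof -
  assume "has_labelling V E A B"
  then obtain a1 a2 b1 b2 where "a1 \<in> A" "a2 \<in> A" "b1 \<in> B" "b2 \<in> B" "labelled_net V E a1 a2 b1 b2"
    unfolding has_labelling_def by blast
  then show "has_labelling V E B A"
    unfolding has_labelling_def by (meson labelled_net_transpose)
qed

lemma other_of_two: "x \<in> {a, b} \<Longrightarrow> \<exists>y. {x, y} = {a, b}"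
  by (auto simp: insert_commute)

lemma has_labelling_join_net_oriented:
  assumes col: "proper_colouring (E1 \<union> E2 \<union> {{u, v}, {u', v'}}) A B"
    and wf: "net_wf V1 E1" "net_wf V2 E2" and V12: "V1 \<inter> V2 = {}"
    and T: "has_labelling V1 E1 A B" and H: "has_labelling V2 E2 A B"
    and u: "u \<in> corners V1 E1" "u' \<in> corners V1 E1" "u \<noteq> u'"
    and v: "v \<in> corners V2 E2" "v' \<in> corners V2 E2" "v \<noteq> v'" and uA: "u \<in> A"
  shows "has_labelling (V1 \<union> V2) (E1 \<union> E2 \<union> {{u, v}, {u', v'}}) A B"
proof -
  obtain a1 a2 b1 b2 where clsT: "a1 \<in> A" "a2 \<in> A" "b1 \<in> B" "b2 \<in> B"
    and LT: "labelled_net V1 E1 a1 a2 b1 b2" using T unfolding has_labelling_def by blast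
  obtain c1 c2 d1 d2 where clsH: "c1 \<in> A" "c2 \<in> A" "d1 \<in> B" "d2 \<in> B"
    and LH: "labelled_net V2 E2 c1 c2 d1 d2" using H unfolding has_labelling_def by blast
  have AB: "\<forall>e\<in>E1 \<union> E2. card (e \<inter> A) = 1 \<and> card (e \<inter> B) = 1" "A \<inter> B = {}"
    using col unfolding proper_colouring_def by auto
  note cT = labelled_corner_colours[OF LT AB(2) clsT] and cH = labelled_corner_colours[OF LH AB(2) clsH]
  have edge_uv: "u \<in> A \<longleftrightarrow> v \<in> B" "u' \<in> A \<or> u' \<in> B" "u' \<in> A \<longleftrightarrow> v' \<in> B" "u' \<in> B \<longleftrightarrow> v' \<in> A"
    using edge_colours[OF col, of u v] edge_colours[OF col, of u' v'] by auto
  have "u \<in> corners V1 E1 \<inter> A" "v \<in> corners V2 E2 \<inter> B" using u(1) v(1) uA edge_uv(1) by blast+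
  then have uT: "u \<in> {a1, a2}" and vH: "v \<in> {d1, d2}" unfolding cT cH .
  show ?thesis
  proof (cases "u' \<in> A")
    case True
    then have "u' \<in> corners V1 E1 \<inter> A" "v' \<in> corners V2 E2 \<inter> B" using u(2) v(2) edge_uv by blast+
    then have uu: "{u, u'} = {a1, a2}" and vv: "{v, v'} = {d1, d2}"
      unfolding cT cH using uT vH u(3) v(3) by (auto simp: doubleton_eq_iff)
    have "labelled_net V1 E1 u u' b1 b2" "labelled_net V2 E2 c1 c2 v v'"
      using labelled_net_relabel[OF LT uu refl] labelled_net_relabel[OF LH refl vv] .
    from labelled_join_same_side[OF AB wf V12 this] True uA edge_uv clsT clsH
    show ?thesis unfolding has_labelling_def by blast
  next
    case False
    then have u'B: "u' \<in> B" and v'A: "v' \<in> A" using edge_uv by blast+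
    obtain p where p: "{u, p} = {a1, a2}" using other_of_two[OF uT] by blast
    have "u' \<in> corners V1 E1 \<inter> B" "v' \<in> corners V2 E2 \<inter> A" using u(2) v(2) u'B v'A by blast+
    then have "u' \<in> {b1, b2}" "v' \<in> {c1, c2}" unfolding cT cH .
    then obtain q r where q: "{u', q} = {b1, b2}" and r: "{v', r} = {c1, c2}" using other_of_two by metis
    obtain s where s: "{v, s} = {d1, d2}" using other_of_two[OF vH] by blast
    have "labelled_net V1 E1 u p u' q" "labelled_net V2 E2 v' r v s"
      using labelled_net_relabel[OF LT p q] labelled_net_relabel[OF LH r s] by blast+
    moreover have "p \<in> {a1, a2}" "q \<in> {b1, b2}" "r \<in> {c1, c2}" "s \<in> {d1, d2}"
      unfolding p[symmetric] q[symmetric] r[symmetric] s[symmetric] by simp_all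
    then have cls: "p \<in> A" "q \<in> B" "r \<in> A" "s \<in> B" using clsT clsH by auto
    moreover have "v \<in> B" using uA edge_uv by blast
    ultimately have "labelled_net (V1 \<union> V2) (E1 \<union> E2 \<union> {{u, v}, {u', v'}}) p r q s"
      using labelled_join_mixed[OF AB wf V12] uA u'B v'A by blast
    with cls show ?thesis unfolding has_labelling_def by blast
  qed
qed

lemma has_labelling_join_net:
  assumes col: "proper_colouring (E1 \<union> E2 \<union> {{u, v}, {u', v'}}) A B"
    and wf: "net_wf V1 E1" "net_wf V2 E2" and V12: "V1 \<inter> V2 = {}"
    and T: "has_labelling V1 E1 A B" and H: "has_labelling V2 E2 A B"
    and u: "u \<in> corners V1 E1" "u' \<in> corners V1 E1" "u \<noteq> u'"
    and v: "v \<in> corners V2 E2" "v' \<in> corners V2 E2" "v \<noteq> v'"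
  shows "has_labelling (V1 \<union> V2) (E1 \<union> E2 \<union> {{u, v}, {u', v'}}) A B"
proof (cases "u \<in> A")
  case True
  show ?thesis by (rule has_labelling_join_net_oriented[OF col wf V12 T H u v True])
next
  case False
  then have "u \<in> B" using edge_colours(1)[OF col, of u v] by blast
  from has_labelling_join_net_oriented[OF proper_colouring_swap[OF col] wf V12
      has_labelling_swap[OF T] has_labelling_swap[OF H] u v this]
  show ?thesis by (rule has_labelling_swap)
qed

lemma has_labelling_join_edge_oriented:
  assumes col: "proper_colouring (E1 \<union> {{a, b}} \<union> {{u, a}, {u', b}}) A B"
    and wf: "net_wf V1 E1" and ab: "a \<noteq> b" "a \<notin> V1" "b \<notin> V1"
    and T: "has_labelling V1 E1 A B"
    and u: "u \<in> corners V1 E1" "u' \<in> corners V1 E1" and uA: "u \<in> A"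
  shows "has_labelling (V1 \<union> {a, b}) (E1 \<union> {{a, b}} \<union> {{u, a}, {u', b}}) A B"
proof -
  obtain a1 a2 b1 b2 where clsT: "a1 \<in> A" "a2 \<in> A" "b1 \<in> B" "b2 \<in> B"
    and LT: "labelled_net V1 E1 a1 a2 b1 b2" using T unfolding has_labelling_def by blast
  have AB: "\<forall>e\<in>E1. card (e \<inter> A) = 1 \<and> card (e \<inter> B) = 1" "A \<inter> B = {}"
    using col unfolding proper_colouring_def by auto
  note cT = labelled_corner_colours[OF LT AB(2) clsT]
  have aB: "a \<in> B" using edge_colours(2)[OF col, of u a] uA by simp
  then have bA: "b \<in> A" using edge_colours(3)[OF col, of a b] by simp
  then have u'B: "u' \<in> B" using edge_colours(3)[OF col, of u' b] edge_colours(1)[OF col, of u' b] AB(2) by blast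
  have "u \<in> corners V1 E1 \<inter> A" "u' \<in> corners V1 E1 \<inter> B" using u uA u'B by blast+
  then have "u \<in> {a1, a2}" "u' \<in> {b1, b2}" unfolding cT .
  then obtain p q where p: "{u, p} = {a1, a2}" and q: "{u', q} = {b1, b2}" using other_of_two by metis
  have "p \<in> {a1, a2}" "q \<in> {b1, b2}" unfolding p[symmetric] q[symmetric] by simp_all
  then have cls: "p \<in> A" "q \<in> B" using clsT by auto
  have "labelled_net (V1 \<union> {a, b}) (E1 \<union> {{a, b}} \<union> {{u, a}, {u', b}}) p b q a"
    using labelled_join_edge[OF AB wf ab labelled_net_relabel[OF LT p q]] uA u'B aB bA cls by blast
  with cls aB bA show ?thesis unfolding has_labelling_def by blast
qed

lemma has_labelling_join_edge:
  assumes col: "proper_colouring (E1 \<union> {{a, b}} \<union> {{u, a}, {u', b}}) A B"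
    and wf: "net_wf V1 E1" and ab: "a \<noteq> b" "a \<notin> V1" "b \<notin> V1"
    and T: "has_labelling V1 E1 A B" and u: "u \<in> corners V1 E1" "u' \<in> corners V1 E1"
  shows "has_labelling (V1 \<union> {a, b}) (E1 \<union> {{a, b}} \<union> {{u, a}, {u', b}}) A B"
proof (cases "u \<in> A")
  case True
  show ?thesis by (rule has_labelling_join_edge_oriented[OF col wf ab T u True])
next
  case False
  then have "u \<in> B" using edge_colours(1)[OF col, of u a] by blast
  from has_labelling_join_edge_oriented[OF proper_colouring_swap[OF col] wf ab
      has_labelling_swap[OF T] u this]
  show ?thesis by (rule has_labelling_swap)
qed

lemma twisted_net_has_labelling:
  "twisted_net V E \<Longrightarrow> proper_colouring E A B \<Longrightarrow> has_labelling V E A B"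
proof (induction arbitrary: A B rule: twisted_net.induct)
  case (cycle4 a b c d)
  have edges: "{a, b} \<in> {{a, b}, {b, c}, {c, d}, {d, a}}" "{b, c} \<in> {{a, b}, {b, c}, {c, d}, {d, a}}"
    "{c, d} \<in> {{a, b}, {b, c}, {c, d}, {d, a}}" by auto
  note L = labelled_cycle[OF cycle4.hyps]
  show ?case
  proof (cases "a \<in> A")
    case True
    then have "b \<in> B" using edge_colours(2)[OF cycle4.prems edges(1)] by simp
    then have "c \<in> A" using edge_colours(3)[OF cycle4.prems edges(2)] by simp
    then have "d \<in> B" using edge_colours(2)[OF cycle4.prems edges(3)] by simp
    with True \<open>b \<in> B\<close> \<open>c \<in> A\<close> L show ?thesis unfolding has_labelling_def by blast
  next
    case False
    then have "a \<in> B" using edge_colours(1)[OF cycle4.prems edges(1)] by simp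
    then have "b \<in> A" using edge_colours(3)[OF cycle4.prems edges(1)] by simp
    then have "c \<in> B" using edge_colours(2)[OF cycle4.prems edges(2)] by simp
    then have "d \<in> A" using edge_colours(3)[OF cycle4.prems edges(3)] by simp
    with \<open>a \<in> B\<close> \<open>b \<in> A\<close> \<open>c \<in> B\<close> L have "has_labelling {a, b, c, d} {{a, b}, {b, c}, {c, d}, {d, a}} B A"
      unfolding has_labelling_def by blast
    then show ?thesis by (rule has_labelling_swap)
  qed
next
  case (join_net V1 E1 V2 E2 u u' v v')
  have "proper_colouring E1 A B" "proper_colouring E2 A B"
    using proper_colouring_subset[OF join_net.prems] by blast+
  with join_net show ?case
    by (intro has_labelling_join_net) (auto intro: twisted_net_wf)
next
  case (join_edge V1 E1 a b u u')
  have "proper_colouring E1 A B" using proper_colouring_subset[OF join_edge.prems] by blast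
  with join_edge show ?case
    by (intro has_labelling_join_edge) (auto intro: twisted_net_wf)
qed

lemma labelled_net_positive_counts:
  assumes "labelled_net V E a1 a2 b1 b2"
  shows "0 < nmatch E (V - {a1, a2, b1, b2})" "\<forall>u\<in>{a1, a2}. \<forall>v\<in>{b1, b2}. 0 < nmatch E (V - {u, v})"
  using labelled_net_counts[OF assms] unfolding good_counts_def by auto

lemma labelled_net_large_count:
  assumes "labelled_net V E a1 a2 b1 b2"
  shows "\<exists>u\<in>{a1, a2}. \<exists>v\<in>{b1, b2}. 2 powr (real (card V) / 18 - 2 / 9) \<le> real (nmatch E (V - {u, v}))"
proof -
  define m where "m u v = nmatch E (V - {u, v})" for u v
  have "2 powr (real (card V) / 18 - 2 / 9)
      \<le> real_of_int (max (max (int (m a1 b1)) (int (m a1 b2))) (max (int (m a2 b1)) (int (m a2 b2))))"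
    using good_counts_bound[OF labelled_net_counts[OF assms]] unfolding m_def .
  moreover have "max (max (int (m a1 b1)) (int (m a1 b2))) (max (int (m a2 b1)) (int (m a2 b2)))
      \<in> {int (m u v) | u v. u \<in> {a1, a2} \<and> v \<in> {b1, b2}}"
    unfolding max_def by (simp; blast)
  ultimately show ?thesis unfolding m_def by auto
qed

theorem mainTheorem17:
  fixes V :: "'a set" and E :: "'a set set" and A B :: "'a set"
  assumes "twisted_net V E" and "bipartite V E" and "bipartition V E A B"
  shows "\<exists>u1 u2 v1 v2. u1 \<in> A \<and> u2 \<in> A \<and> u1 \<noteq> u2 \<and> v1 \<in> B \<and> v2 \<in> B \<and> v1 \<noteq> v2 \<and>
     corners V E \<inter> A = {u1, u2} \<and> corners V E \<inter> B = {v1, v2} \<and>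
     perfect_matchings (del_verts_V V {u1, u2, v1, v2}) (del_verts_E E {u1, u2, v1, v2}) \<noteq> {} \<and>
     (\<forall>u\<in>{u1, u2}. \<forall>v\<in>{v1, v2}.
        perfect_matchings (del_verts_V V {u, v}) (del_verts_E E {u, v}) \<noteq> {}) \<and>
     (\<exists>u\<in>{u1, u2}. \<exists>v\<in>{v1, v2}.
        real (card (perfect_matchings (del_verts_V V {u, v}) (del_verts_E E {u, v})))
          \<ge> 2 powr (real (card V) / 18 - 2 / 9))"
proof -
  have col: "proper_colouring E A B" using assms(3) unfolding bipartition_def proper_colouring_def by blast
  obtain a1 a2 b1 b2 where cls: "a1 \<in> A" "a2 \<in> A" "b1 \<in> B" "b2 \<in> B"
    and L: "labelled_net V E a1 a2 b1 b2"
    using twisted_net_has_labelling[OF assms(1) col] unfolding has_labelling_def by blast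
  have "\<forall>e\<in>E. e \<subseteq> V" using twisted_net_wf[OF assms(1)] unfolding net_wf_def by blast
  note pm = perfect_matchings_eq_matchings[OF this]
  have pos: "perfect_matchings (del_verts_V V S) (del_verts_E E S) \<noteq> {}" if "0 < nmatch E (V - S)" for S
    using that unfolding pm nmatch_def by auto
  have ne: "a1 \<noteq> a2" "b1 \<noteq> b2" using L unfolding labelled_net_def by auto
  have AB: "A \<inter> B = {}" using col unfolding proper_colouring_def by blast
  note corners = labelled_corner_colours[OF L AB cls] and counts = labelled_net_positive_counts[OF L]
  have deleted_all: "perfect_matchings (del_verts_V V {a1, a2, b1, b2}) (del_verts_E E {a1, a2, b1, b2}) \<noteq> {}"
    using pos counts(1) by blast
  have deleted_pair: "\<forall>u\<in>{a1, a2}. \<forall>v\<in>{b1, b2}.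
      perfect_matchings (del_verts_V V {u, v}) (del_verts_E E {u, v}) \<noteq> {}"
    using pos counts(2) by blast
  have large: "\<exists>u\<in>{a1, a2}. \<exists>v\<in>{b1, b2}.
      real (card (perfect_matchings (del_verts_V V {u, v}) (del_verts_E E {u, v})))
        \<ge> 2 powr (real (card V) / 18 - 2 / 9)"
    using labelled_net_large_count[OF L] unfolding pm nmatch_def by simp
  show ?thesis
    by (intro exI[of _ a1] exI[of _ a2] exI[of _ b1] exI[of _ b2] conjI)
      (fact cls ne corners deleted_all deleted_pair large)+
qed

end
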